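(* For each $n\ge1$, the number of spanning forests of $\Sigma_n$ equals $H_n(2,1)=H_{2,n}(2,1)+3N_n(2,1)+M_n(2,1)$, where, writing $H_2,N,M$ for $H_{2,n}(2,1),N_n(2,1),M_n(2,1)$, $$H_{2,n+1}(2,1)=3H_2^3+12H_2^2N+6H_2N^2,$$ $$N_{n+1}(2,1)=H_2^3+12H_2^2N+4H_2^2M+28H_2N^2+8H_2NM+14N^3+4N^2M,$$ $$M_{n+1}(2,1)=H_2^3+21H_2^2N+12H_2^2M+123H_2N^2+120H_2NM+24H_2M^2+173N^3+204N^2M+72NM^2+8M^3,$$ with $H_{2,1}(2,1)=3$, $N_1(2,1)=M_1(2,1)=1$.
   Context: Graphs are finite. For a graph $G$, a spanning subgraph $A$ has vertex set $V(G)$ and edge set $E(A)\subseteq E(G)$; $k(A)$ is its number of components, $r(A)=|V(G)|-k(A)$, $n(A)=|E(A)|-r(A)$; the weight of $A$ is $(x-1)^{r(G)-r(A)}(y-1)^{n(A)}$ and the Tutte polynomial $T(G;x,y)$ is the sum of the weights of all spanning subgraphs. The graphs $\Sigma_n$ ($n\ge1$; Schreier graphs of the Hanoi Towers group $H^{(3)}$ with loops removed) each have three outmost vertices top, left, right: $\Sigma_1$ is the triangle $K_3$; $\Sigma_{n+1}$ is the disjoint union of three copies $G_1,G_2,G_3$ of $\Sigma_n$ together with three new edges joining left$(G_1)$ to top$(G_2)$, right$(G_1)$ to top$(G_3)$, and right$(G_2)$ to left$(G_3)$; its outmost vertices are top$(G_1)$, left$(G_2)$, right$(G_3)$. $H_n=T(\Sigma_n;x,y)$.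 $H_{2,n}$ (resp. $H_{1,n}$, $H_{0,n}$) is the sum of the weights of the spanning subgraphs of $\Sigma_n$ in which the three outmost vertices lie in one component (resp. left and right outmost in one component, top in another; resp. the three in three distinct components). $N_n=H_{1,n}/(x-1)$ and $M_n=H_{0,n}/(x-1)^2$, which are polynomials. A spanning forest is an acyclic spanning subgraph. *)

theory Defs
  imports Complex_Main
begin

text \<open>Vertices of Sigma_n: words of length n over {0,1,2}; copy i of Sigma_n inside
Sigma_(n+1) consists of the words starting with i.  Outmost vertices:
top = 0^n, left = 1^n, right = 2^n.\<close>

fun sverts :: "nat \<Rightarrow> nat list set" where
  "sverts 0 = {[]}"
| "sverts (Suc n) = (\<Union>i\<in>{0,1,2}. Cons i ` sverts n)"

definition top_v :: "nat \<Rightarrow> nat list" where "top_v n = replicate n 0"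
definition left_v :: "nat \<Rightarrow> nat list" where "left_v n = replicate n 1"
definition right_v :: "nat \<Rightarrow> nat list" where "right_v n = replicate n 2"

fun sedges :: "nat \<Rightarrow> nat list set set" where
  "sedges 0 = {}"
| "sedges (Suc 0) = {{[0],[1]}, {[0],[2]}, {[1],[2]}}"
| "sedges (Suc (Suc n)) =
     (\<Union>i\<in>{0,1,2}. (\<lambda>e. Cons i ` e) ` sedges (Suc n)) \<union>
     {{0 # left_v (Suc n), 1 # top_v (Suc n)},
      {0 # right_v (Suc n), 2 # top_v (Suc n)},
      {1 # right_v (Suc n), 2 # left_v (Suc n)}}"

definition adj :: "'a set set \<Rightarrow> ('a \<times> 'a) set" where
  "adj A = {(u, v). {u, v} \<in> A}"

definition connected_in :: "'a set set \<Rightarrow> 'a \<Rightarrow> 'a \<Rightarrow> bool" where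
  "connected_in A u v \<longleftrightarrow> (u, v) \<in> (adj A)\<^sup>*"

definition ncomp :: "'a set \<Rightarrow> 'a set set \<Rightarrow> nat" where
  "ncomp V A = card ((\<lambda>v. {u \<in> V. connected_in A v u}) ` V)"

definition grank :: "'a set \<Rightarrow> 'a set set \<Rightarrow> nat" where
  "grank V A = card V - ncomp V A"

definition gnullity :: "'a set \<Rightarrow> 'a set set \<Rightarrow> nat" where
  "gnullity V A = card A - grank V A"

definition tweight :: "'a set \<Rightarrow> 'a set set \<Rightarrow> 'a set set \<Rightarrow> real \<Rightarrow> real \<Rightarrow> real" where
  "tweight V E A x y = (x - 1) ^ (grank V E - grank V A) * (y - 1) ^ gnullity V A"

definition tutte :: "'a set \<Rightarrow> 'a set set \<Rightarrow> real \<Rightarrow> real \<Rightarrow> real" where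
  "tutte V E x y = (\<Sum>A\<in>Pow E. tweight V E A x y)"

definition has_cycle :: "'a set set \<Rightarrow> bool" where
  "has_cycle A \<longleftrightarrow> (\<exists>vs. 3 \<le> length vs \<and> distinct vs \<and>
      (\<forall>i < length vs. {vs ! i, vs ! ((i + 1) mod length vs)} \<in> A))"

definition spanning_forests :: "'a set set \<Rightarrow> 'a set set set" where
  "spanning_forests E = {A. A \<subseteq> E \<and> \<not> has_cycle A}"

definition H :: "nat \<Rightarrow> real \<Rightarrow> real \<Rightarrow> real" where
  "H n x y = tutte (sverts n) (sedges n) x y"

definition H2 :: "nat \<Rightarrow> real \<Rightarrow> real \<Rightarrow> real" where
  "H2 n x y = (\<Sum>A | A \<subseteq> sedges n \<and> connected_in A (top_v n) (left_v n)
       \<and> connected_in A (top_v n) (right_v n). tweight (sverts n) (sedges n) A x y)"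

definition H1 :: "nat \<Rightarrow> real \<Rightarrow> real \<Rightarrow> real" where
  "H1 n x y = (\<Sum>A | A \<subseteq> sedges n \<and> connected_in A (left_v n) (right_v n)
       \<and> \<not> connected_in A (top_v n) (left_v n). tweight (sverts n) (sedges n) A x y)"

definition H0 :: "nat \<Rightarrow> real \<Rightarrow> real \<Rightarrow> real" where
  "H0 n x y = (\<Sum>A | A \<subseteq> sedges n \<and> \<not> connected_in A (top_v n) (left_v n)
       \<and> \<not> connected_in A (top_v n) (right_v n) \<and> \<not> connected_in A (left_v n) (right_v n).
       tweight (sverts n) (sedges n) A x y)"

definition N :: "nat \<Rightarrow> real \<Rightarrow> real \<Rightarrow> real" where
  "N n x y = H1 n x y / (x - 1)"

definition M :: "nat \<Rightarrow> real \<Rightarrow> real \<Rightarrow> real" where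
  "M n x y = H0 n x y / (x - 1) ^ 2"

end

theory Submission
  imports Defs
begin

(*
  At (x,y) = (2,1) the Tutte weight of an edge set A is 1 if its nullity
  |A| + k(A) - |V| vanishes and 0 otherwise, and nullity zero means A is
  acyclic; so H_n(2,1) counts spanning forests.  A forest of Sigma_n has a
  "port type" recording which outmost vertices it connects; of the five
  possible types, H2, N, M count "all connected", "only left~right" and "none
  connected".  An edge set of Sigma_(n+1) is the same as three edge sets of
  Sigma_n plus a choice of bridges; it is a forest of type t iff the parts are
  forests and the bridges close no cycle and produce type t, which depends only
  on the parts' types.  This gives a cubic recursion for the counts per type,
  whose coefficients are evaluated; a symmetry of Sigma_n equates the three
  "one pair connected" counts.
*)

section \<open>Connectivity\<close>

lemma conn_refl [simp]: "connected_in A u u"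
  by (simp add: connected_in_def)

lemma conn_sym: "connected_in A u v \<Longrightarrow> connected_in A v u"
proof -
  have "sym (adj A)" by (auto simp: sym_def adj_def insert_commute)
  then have "sym ((adj A)\<^sup>*)" by (rule sym_rtrancl)
  then show "connected_in A u v \<Longrightarrow> connected_in A v u"
    unfolding connected_in_def by (auto dest: symD)
qed

lemma conn_sym_iff: "connected_in A u v \<longleftrightarrow> connected_in A v u"
  using conn_sym[of A u v] conn_sym[of A v u] by blast

lemma conn_trans: "connected_in A u v \<Longrightarrow> connected_in A v w \<Longrightarrow> connected_in A u w"
  unfolding connected_in_def by (rule rtrancl_trans)

lemma conn_edge: "{u,v} \<in> A \<Longrightarrow> connected_in A u v"
  unfolding connected_in_def adj_def by auto

lemma conn_mono: "A \<subseteq> B \<Longrightarrow> connected_in A u v \<Longrightarrow> connected_in B u v"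
proof -
  assume "A \<subseteq> B" "connected_in A u v"
  moreover have "adj A \<subseteq> adj B" using \<open>A \<subseteq> B\<close> by (auto simp: adj_def)
  ultimately show ?thesis unfolding connected_in_def using rtrancl_mono by blast
qed

lemma conn_insert:
  "connected_in (insert {u,v} A) x y \<longleftrightarrow> connected_in A x y
     \<or> (connected_in A x u \<and> connected_in A v y) \<or> (connected_in A x v \<and> connected_in A u y)"
  (is "?L \<longleftrightarrow> ?R")
proof
  assume ?L
  moreover have "adj (insert {u,v} A) = adj A \<union> {(u,v),(v,u)}"
    by (auto simp: adj_def doubleton_eq_iff)
  ultimately have "(x,y) \<in> (adj A \<union> {(u,v),(v,u)})\<^sup>*"
    by (simp add: connected_in_def)
  then show ?R
  proof (induction rule: rtrancl_induct)
    case (step y z)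
    then consider "(y,z) \<in> adj A" | "y = u" "z = v" | "y = v" "z = u" by blast
    then show ?case
    proof cases
      case 1
      then have "connected_in A y z" by (simp add: connected_in_def)
      then show ?thesis using step.IH conn_trans[OF _ \<open>connected_in A y z\<close>] by blast
    next
      case 2 with step.IH show ?thesis by auto
    next
      case 3 with step.IH show ?thesis by auto
    qed
  qed simp
next
  have e: "connected_in (insert {u,v} A) u v" "connected_in (insert {u,v} A) v u"
    by (simp_all add: conn_edge insert_commute)
  note up = conn_mono[of A "insert {u,v} A", OF subset_insertI]
  assume ?R
  then show ?L
  proof (elim disjE conjE)
    assume "connected_in A x u" "connected_in A v y"
    then show ?L using conn_trans[OF conn_trans[OF up e(1)] up] by blast
  next
    assume "connected_in A x v" "connected_in A u y"
    then show ?L using conn_trans[OF conn_trans[OF up e(2)] up] by blast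
  qed (rule up)
qed

definition component :: "'a set set \<Rightarrow> 'a set \<Rightarrow> 'a \<Rightarrow> 'a set" where
  "component A V x = {w \<in> V. connected_in A x w}"

lemma ncomp_components: "ncomp V A = card (component A V ` V)"
  by (simp add: ncomp_def component_def)

lemma component_eq_iff:
  assumes "x \<in> V" "y \<in> V"
  shows "component A V x = component A V y \<longleftrightarrow> connected_in A x y"
proof
  assume "component A V x = component A V y"
  moreover have "y \<in> component A V y" using assms by (simp add: component_def)
  ultimately have "y \<in> component A V x" by simp
  then show "connected_in A x y" by (simp add: component_def)
next
  assume xy: "connected_in A x y"
  have "connected_in A x w \<longleftrightarrow> connected_in A y w" for w
    using conn_trans[OF xy, of w] conn_trans[OF conn_sym[OF xy], of w] by blast
  then show "component A V x = component A V y" unfolding component_def by simp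
qed

lemma ncomp_le: "finite V \<Longrightarrow> ncomp V A \<le> card V"
  by (simp add: ncomp_components card_image_le)

lemma ncomp_empty: "ncomp V {} = card V"
proof -
  have "(adj ({}::'a set set))\<^sup>* = Id" by (simp add: adj_def)
  then have "component {} V x = (if x \<in> V then {x} else {})" for x
    by (auto simp: component_def connected_in_def)
  then have "component {} V ` V = (\<lambda>x. {x}) ` V" by auto
  then show ?thesis by (simp add: ncomp_components card_image)
qed

lemma ncomp_insert_connected:
  assumes "connected_in A u v"
  shows "ncomp V (insert {u,v} A) = ncomp V A"
proof -
  have "connected_in (insert {u,v} A) x y = connected_in A x y" for x y
  proof -
    have "connected_in A x u \<Longrightarrow> connected_in A v y \<Longrightarrow> connected_in A x y"
      using conn_trans[OF conn_trans[OF _ assms]] by blast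
    moreover have "connected_in A x v \<Longrightarrow> connected_in A u y \<Longrightarrow> connected_in A x y"
      using conn_trans[OF conn_trans[OF _ conn_sym[OF assms]]] by blast
    ultimately show ?thesis using conn_insert[of u v A x y] by blast
  qed
  then have "connected_in (insert {u,v} A) = connected_in A" by (intro ext)
  then show ?thesis unfolding ncomp_def by (simp only:)
qed

lemma component_insert:
  assumes "\<not> connected_in A u v"
  shows "component (insert {u,v} A) V x =
    (if connected_in A x u \<or> connected_in A x v then component A V u \<union> component A V v
     else component A V x)"
proof (cases "connected_in A x u \<or> connected_in A x v")
  case True
  have "connected_in (insert {u,v} A) x w \<longleftrightarrow> connected_in A u w \<or> connected_in A v w" for w
  proof
    assume "connected_in (insert {u,v} A) x w"
    then consider "connected_in A x w" | "connected_in A v w" | "connected_in A u w"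
      using conn_insert[of u v A x w] by blast
    then show "connected_in A u w \<or> connected_in A v w"
    proof cases
      case 1
      then show ?thesis
        using True conn_trans[OF conn_sym[of A x u] 1] conn_trans[OF conn_sym[of A x v] 1] by blast
    qed simp_all
  next
    assume "connected_in A u w \<or> connected_in A v w"
    then show "connected_in (insert {u,v} A) x w"
      using True conn_trans[of A x u w] conn_trans[of A x v w] conn_insert[of u v A x w] by blast
  qed
  then show ?thesis using True unfolding component_def by auto
next
  case False
  have "connected_in (insert {u,v} A) x w \<longleftrightarrow> connected_in A x w" for w
    using False conn_insert[of u v A x w] by blast
  then show ?thesis using False unfolding component_def by auto
qed

lemma components_insert:
  assumes V: "u \<in> V" "v \<in> V" and nc: "\<not> connected_in A u v"
  shows "component (insert {u,v} A) V ` V =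
    insert (component A V u \<union> component A V v) (component A V ` V - {component A V u, component A V v})"
    (is "?C' ` V = _")
proof -
  let ?C = "component A V"
  have C': "?C' x = (if connected_in A x u \<or> connected_in A x v then ?C u \<union> ?C v else ?C x)" for x
    by (rule component_insert[OF nc])
  show ?thesis
  proof
    show "?C' ` V \<subseteq> insert (?C u \<union> ?C v) (?C ` V - {?C u, ?C v})"
    proof
      fix X assume "X \<in> ?C' ` V"
      then obtain x where x: "x \<in> V" "X = ?C' x" by blast
      show "X \<in> insert (?C u \<union> ?C v) (?C ` V - {?C u, ?C v})"
      proof (cases "connected_in A x u \<or> connected_in A x v")
        case True then show ?thesis using x C' by simp
      next
        case False
        then have "?C x \<noteq> ?C u" "?C x \<noteq> ?C v" using component_eq_iff x V by metis+
        then show ?thesis using x C' False by auto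
      qed
    qed
  next
    show "insert (?C u \<union> ?C v) (?C ` V - {?C u, ?C v}) \<subseteq> ?C' ` V"
    proof
      fix X assume X: "X \<in> insert (?C u \<union> ?C v) (?C ` V - {?C u, ?C v})"
      show "X \<in> ?C' ` V"
      proof (cases "X = ?C u \<union> ?C v")
        case True then show ?thesis using C'[of u] V by (auto intro!: image_eqI[where x=u])
      next
        case False
        then obtain x where x: "x \<in> V" "X = ?C x" "?C x \<noteq> ?C u" "?C x \<noteq> ?C v" using X by auto
        then have "\<not> connected_in A x u" "\<not> connected_in A x v" using component_eq_iff V by metis+
        then show ?thesis using x C' by (auto intro!: image_eqI[where x=x])
      qed
    qed
  qed
qed

lemma ncomp_insert_disconnected:
  assumes V: "finite V" "u \<in> V" "v \<in> V" and nc: "\<not> connected_in A u v"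
  shows "ncomp V (insert {u,v} A) + 1 = ncomp V A"
proof -
  let ?C = "component A V" and ?C' = "component (insert {u,v} A) V"
  have uv: "?C u \<noteq> ?C v" using component_eq_iff[of u V v A] V nc by auto
  have im: "?C' ` V = insert (?C u \<union> ?C v) (?C ` V - {?C u, ?C v})"
    by (rule components_insert[OF V(2,3) nc])
  have notin: "?C u \<union> ?C v \<notin> ?C ` V - {?C u, ?C v}"
  proof
    assume "?C u \<union> ?C v \<in> ?C ` V - {?C u, ?C v}"
    then obtain x where x: "x \<in> V" "?C u \<union> ?C v = ?C x" "?C x \<noteq> ?C u" by auto
    have "u \<in> ?C u" using V by (simp add: component_def)
    then have "u \<in> ?C x" using x by auto
    then have "connected_in A x u" by (simp add: component_def)
    then have "?C x = ?C u" using component_eq_iff x V by metis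
    then show False using x by simp
  qed
  have fin: "finite (?C ` V)" using V by simp
  have mem: "?C u \<in> ?C ` V" "?C v \<in> ?C ` V" using V by auto
  have "card (?C' ` V) = card (?C ` V - {?C u, ?C v}) + 1"
    using im notin fin by simp
  also have "card (?C ` V - {?C u, ?C v}) = card (?C ` V) - 2"
    using mem uv fin by (simp add: card_Diff_subset)
  finally have "card (?C' ` V) = card (?C ` V) - 2 + 1" .
  moreover have "card {?C u, ?C v} \<le> card (?C ` V)" using mem fin by (intro card_mono) auto
  ultimately show ?thesis using uv by (simp add: ncomp_components)
qed

section \<open>The nullity and cycles\<close>

definition nullity :: "'a set \<Rightarrow> 'a set set \<Rightarrow> int" where
  "nullity V A = int (card A) + int (ncomp V A) - int (card V)"

definition proper_edges :: "'a set \<Rightarrow> 'a set set \<Rightarrow> bool" where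
  "proper_edges V A \<longleftrightarrow> (\<forall>e\<in>A. \<exists>u v. e = {u,v} \<and> u \<noteq> v \<and> u \<in> V \<and> v \<in> V)"

lemma proper_edges_subset: "proper_edges V A \<Longrightarrow> B \<subseteq> A \<Longrightarrow> proper_edges V B"
  by (auto simp: proper_edges_def)

lemma proper_edges_nonempty: "proper_edges V A \<Longrightarrow> {} \<notin> A"
  by (auto simp: proper_edges_def)

lemma nullity_empty: "nullity V {} = 0"
  by (simp add: nullity_def ncomp_empty)

lemma nullity_insert:
  assumes "finite V" "finite A" "u \<in> V" "v \<in> V" "{u,v} \<notin> A"
  shows "nullity V (insert {u,v} A) = nullity V A + (if connected_in A u v then 1 else 0)"
proof (cases "connected_in A u v")
  case True then show ?thesis using assms ncomp_insert_connected[OF True] by (simp add: nullity_def)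
next
  case False then show ?thesis using assms ncomp_insert_disconnected[of V u v A] by (simp add: nullity_def)
qed

lemma nullity_nonneg:
  assumes "finite V" "finite A" "proper_edges V A"
  shows "0 \<le> nullity V A"
  using assms(2,3)
proof (induction A rule: finite_induct)
  case empty then show ?case by (simp add: nullity_empty)
next
  case (insert e A)
  then obtain u v where e: "e = {u,v}" "u \<in> V" "v \<in> V" by (auto simp: proper_edges_def)
  have "proper_edges V A" using insert.prems by (simp add: proper_edges_def)
  then have "0 \<le> nullity V A" using insert.IH by simp
  then show ?case using nullity_insert[OF assms(1) insert.hyps(1) e(2,3)] insert.hyps(2) e(1) by simp
qed

lemma tweight_2_1:
  assumes "finite V" "finite A" "proper_edges V A"
  shows "tweight V E A 2 1 = (if nullity V A = 0 then 1 else 0)"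
proof -
  have "gnullity V A = nat (nullity V A)"
    using ncomp_le[OF assms(1), of A] by (simp add: gnullity_def grank_def nullity_def)
  then show ?thesis using nullity_nonneg[OF assms] by (simp add: tweight_def)
qed

definition is_path :: "'a set set \<Rightarrow> 'a list \<Rightarrow> bool" where
  "is_path A ps \<longleftrightarrow> distinct ps \<and> (\<forall>i. Suc i < length ps \<longrightarrow> {ps ! i, ps ! Suc i} \<in> A)"

text \<open>A path can be continued along an edge, cutting it short if the new
  vertex was already visited.\<close>

lemma path_extend:
  assumes ps: "ps \<noteq> []" "is_path A ps" and yz: "{last ps, z} \<in> A"
  shows "\<exists>qs. qs \<noteq> [] \<and> hd qs = hd ps \<and> last qs = z \<and> is_path A qs"
proof (cases "z \<in> set ps")
  case True
  then obtain k where k: "k < length ps" "ps ! k = z" by (auto simp: in_set_conv_nth)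
  let ?qs = "take (Suc k) ps"
  have "last ?qs = z" using k by (simp add: take_Suc_conv_app_nth)
  moreover have "is_path A ?qs" using ps(2) k unfolding is_path_def by auto
  ultimately show ?thesis using ps(1) by (intro exI[of _ ?qs]) simp
next
  case False
  let ?qs = "ps @ [z]"
  have "is_path A ?qs"
    unfolding is_path_def
  proof (intro conjI allI impI)
    show "distinct ?qs" using ps(2) False by (simp add: is_path_def)
  next
    fix i assume i: "Suc i < length ?qs"
    show "{?qs ! i, ?qs ! Suc i} \<in> A"
    proof (cases "Suc i < length ps")
      case True then show ?thesis using ps(2) by (simp add: is_path_def nth_append)
    next
      case False
      then have "i = length ps - 1" "Suc i = length ps" using i by auto
      then show ?thesis using ps(1) yz by (simp add: nth_append last_conv_nth)
    qed
  qed
  then show ?thesis using ps(1) by (intro exI[of _ ?qs]) simp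
qed

lemma conn_path:
  assumes "connected_in A x y"
  shows "\<exists>ps. ps \<noteq> [] \<and> hd ps = x \<and> last ps = y \<and> is_path A ps"
proof -
  have "(x,y) \<in> (adj A)\<^sup>*" using assms by (simp add: connected_in_def)
  then show ?thesis
  proof (induction rule: rtrancl_induct)
    case base then show ?case by (intro exI[of _ "[x]"]) (simp add: is_path_def)
  next
    case (step y z)
    then obtain ps where ps: "ps \<noteq> []" "hd ps = x" "last ps = y" "is_path A ps" by blast
    have "{last ps, z} \<in> A" using step.hyps(2) ps(3) by (simp add: adj_def)
    then show ?case using path_extend[OF ps(1,4)] ps(2) by blast
  qed
qed

lemma conn_to_cycle:
  assumes "connected_in A u v" "u \<noteq> v" "{u,v} \<notin> A"
  shows "has_cycle (insert {u,v} A)"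
proof -
  obtain ps where ps: "ps \<noteq> []" "hd ps = u" "last ps = v" "is_path A ps"
    using conn_path[OF assms(1)] by blast
  have l1: "length ps \<noteq> 1"
  proof
    assume "length ps = 1"
    then obtain a where "ps = [a]" by (cases ps) auto
    then show False using ps assms(2) by simp
  qed
  have l2: "length ps \<noteq> 2"
  proof
    assume "length ps = 2"
    then obtain a b where ab: "ps = [a,b]" by (cases ps; cases "tl ps") auto
    then have "{ps ! 0, ps ! Suc 0} \<in> A" using ps(4) by (simp add: is_path_def)
    then show False using ab ps assms(3) by simp
  qed
  have L: "3 \<le> length ps" using l1 l2 ps(1) by (cases "length ps") auto
  show ?thesis unfolding has_cycle_def
  proof (intro exI[of _ ps] conjI allI impI)
    show "3 \<le> length ps" by (rule L)
    show "distinct ps" using ps(4) by (simp add: is_path_def)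
  next
    fix i assume i: "i < length ps"
    show "{ps ! i, ps ! ((i + 1) mod length ps)} \<in> insert {u, v} A"
    proof (cases "Suc i < length ps")
      case True then show ?thesis using ps(4) by (simp add: is_path_def)
    next
      case False
      then have "i = length ps - 1" using i by auto
      moreover have "ps ! (length ps - 1) = v" using ps(1,3) by (simp add: last_conv_nth)
      moreover have "ps ! 0 = u" using ps(1,2) by (simp add: hd_conv_nth)
      ultimately show ?thesis using ps(1) L by (simp add: insert_commute)
    qed
  qed
qed

definition cycle_edge :: "'a list \<Rightarrow> nat \<Rightarrow> 'a set" where
  "cycle_edge vs i = {vs ! i, vs ! ((i + 1) mod length vs)}"

lemma has_cycle_iff:
  "has_cycle A \<longleftrightarrow> (\<exists>vs. 3 \<le> length vs \<and> distinct vs \<and> (\<forall>i < length vs. cycle_edge vs i \<in> A))"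
  by (simp add: has_cycle_def cycle_edge_def)

lemma cycle_edge_inj:
  assumes vs: "3 \<le> length vs" "distinct vs" and ij: "i < length vs" "j < length vs"
    and eq: "cycle_edge vs j = cycle_edge vs i"
  shows "j = i"
proof -
  define L where "L = length vs"
  have d: "vs ! a = vs ! b \<longleftrightarrow> a = b" if "a < L" "b < L" for a b
    using vs(2) that nth_eq_iff_index_eq unfolding L_def by blast
  have m: "(k + 1) mod L < L" for k using vs(1) unfolding L_def by (intro mod_less_divisor) linarith
  have jL: "j < L" and iL: "i < L" using ij unfolding L_def by simp_all
  from eq consider "vs ! j = vs ! i" | "vs ! j = vs ! ((i+1) mod L)" "vs ! ((j+1) mod L) = vs ! i"
    unfolding cycle_edge_def L_def[symmetric] by (auto simp: doubleton_eq_iff)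
  then show ?thesis
  proof cases
    case 1 then show ?thesis using d[OF jL iL] by blast
  next
    case 2
    then have "j = (i+1) mod L" "(j+1) mod L = i" using d[OF jL m] d[OF m iL] by auto
    then have "(i + 2) mod L = i" by (simp add: mod_Suc_eq)
    moreover have "3 \<le> L" "i < L" using vs(1) ij unfolding L_def by simp_all
    ultimately show ?thesis
    proof (cases "i + 2 < L")
      case False
      then have "(i+2) mod L = (i + 2 - L) mod L" by (simp add: le_mod_geq)
      also have "\<dots> = i + 2 - L" using \<open>i < L\<close> \<open>3 \<le> L\<close> by (intro mod_less) linarith
      finally show ?thesis using \<open>(i+2) mod L = i\<close> \<open>3 \<le> L\<close> False by linarith
    qed simp
  qed
qed

lemma cycle_walk:
  assumes L: "3 \<le> length vs" "i < length vs"
    and other: "\<And>j. j < length vs \<Longrightarrow> j \<noteq> i \<Longrightarrow> cycle_edge vs j \<in> A"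
  shows "connected_in A (vs ! ((i+1) mod length vs)) (vs ! i)"
proof -
  define L where "L = length vs"
  have walk: "connected_in A (vs ! ((i+1) mod L)) (vs ! ((i+1+k) mod L))" if "k \<le> L - 1" for k
    using that
  proof (induction k)
    case (Suc k)
    let ?j = "(i+1+k) mod L"
    have jL: "?j < L" using L L_def by (intro mod_less_divisor) linarith
    have "?j \<noteq> i"
    proof
      assume "?j = i"
      have kL: "k+1 < L" using Suc.prems L L_def by auto
      show False
      proof (cases "i+1+k < L")
        case False
        then have "?j = (i+1+k - L) mod L" by (simp add: le_mod_geq)
        also have "\<dots> = i+1+k - L" using L kL unfolding L_def by (intro mod_less) linarith
        finally show False using \<open>?j = i\<close> kL False by linarith
      qed (use \<open>?j = i\<close> in simp)
    qed
    then have "cycle_edge vs ?j \<in> A" using other jL L_def by blast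
    then have "connected_in A (vs ! ?j) (vs ! ((?j + 1) mod L))"
      unfolding cycle_edge_def L_def by (rule conn_edge)
    moreover have "(?j + 1) mod L = (i + 1 + Suc k) mod L" by (simp add: mod_Suc_eq)
    ultimately show ?case using Suc conn_trans by fastforce
  qed simp
  have "i+1+(L-1) = i + L" using L L_def by simp
  then have "(i+1+(L-1)) mod L = i" using L L_def by simp
  then show ?thesis using walk[of "L-1"] L_def by simp
qed

lemma cycle_to_conn:
  assumes "has_cycle (insert {u,v} A)" "\<not> has_cycle A"
  shows "connected_in A u v"
proof -
  obtain vs where vs: "3 \<le> length vs" "distinct vs"
    "\<And>i. i < length vs \<Longrightarrow> cycle_edge vs i \<in> insert {u,v} A"
    using assms(1) unfolding has_cycle_iff by blast
  obtain i where i: "i < length vs" "cycle_edge vs i \<notin> A"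
    using assms(2) vs unfolding has_cycle_iff by blast
  have edge_i: "cycle_edge vs i = {u,v}" using vs(3)[of i] i by auto
  have "cycle_edge vs j \<in> A" if "j < length vs" "j \<noteq> i" for j
    using vs(3)[OF that(1)] cycle_edge_inj[OF vs(1,2) i(1) that(1)] that(2) edge_i by auto
  then have c: "connected_in A (vs ! ((i+1) mod length vs)) (vs ! i)"
    using cycle_walk[OF vs(1) i(1)] by blast
  from edge_i have "(vs ! i = u \<and> vs ! ((i+1) mod length vs) = v) \<or> (vs ! i = v \<and> vs ! ((i+1) mod length vs) = u)"
    unfolding cycle_edge_def doubleton_eq_iff by blast
  then show ?thesis using c conn_sym by metis
qed

lemma has_cycle_mono: "has_cycle A \<Longrightarrow> A \<subseteq> B \<Longrightarrow> has_cycle B"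
  unfolding has_cycle_def by blast

lemma has_cycle_nullity:
  assumes "finite V" "finite A" "proper_edges V A"
  shows "has_cycle A \<longleftrightarrow> 0 < nullity V A"
  using assms(2,3)
proof (induction A rule: finite_induct)
  case empty then show ?case by (auto simp: nullity_empty has_cycle_def intro: exI[of _ 0])
next
  case (insert e A)
  then obtain u v where e: "e = {u,v}" "u \<noteq> v" "u \<in> V" "v \<in> V" by (auto simp: proper_edges_def)
  have eA: "proper_edges V A" using insert.prems by (simp add: proper_edges_def)
  have nul: "nullity V (insert e A) = nullity V A + (if connected_in A u v then 1 else 0)"
    using nullity_insert[OF assms(1) insert.hyps(1) e(3,4)] insert.hyps(2) e(1) by simp
  have nn: "0 \<le> nullity V A" using nullity_nonneg[OF assms(1) insert.hyps(1) eA] .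
  show ?case
  proof (cases "has_cycle A")
    case True
    then show ?thesis using insert.IH[OF eA] nul has_cycle_mono[of A "insert e A"] by auto
  next
    case False
    then have "nullity V A = 0" using insert.IH[OF eA] nn by simp
    moreover have "has_cycle (insert e A) \<longleftrightarrow> connected_in A u v"
      using conn_to_cycle[of A u v] cycle_to_conn[of u v A] False e insert.hyps(2) by auto
    ultimately show ?thesis using nul by simp
  qed
qed

section \<open>Relabelled copies and disjoint unions\<close>

lemma inj_image_fun: "inj f \<Longrightarrow> inj (\<lambda>C. f ` C)"
  unfolding inj_def using inj_image_eq_iff by blast

lemma inj_Cons: "inj (Cons i)"
  by (simp add: inj_def)

definition edge_image :: "('a \<Rightarrow> 'b) \<Rightarrow> 'a set set \<Rightarrow> 'b set set" where
  "edge_image f A = (\<lambda>e. f ` e) ` A"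

lemma finite_edge_image: "finite A \<Longrightarrow> finite (edge_image f A)" by (simp add: edge_image_def)

lemma adj_edge_image:
  assumes "inj f" shows "adj (edge_image f A) = map_prod f f ` adj A"
proof
  show "adj (edge_image f A) \<subseteq> map_prod f f ` adj A"
  proof
    fix p assume "p \<in> adj (edge_image f A)"
    then obtain x y e where p: "p = (x,y)" "e \<in> A" "{x,y} = f ` e" by (auto simp: adj_def edge_image_def)
    then obtain a b where ab: "a \<in> e" "b \<in> e" "x = f a" "y = f b" by (metis imageE insertI1 insertI2)
    then have "f ` e = f ` {a,b}" using p by simp
    then have "e = {a,b}" using assms by (metis image_empty image_insert inj_image_eq_iff)
    then show "p \<in> map_prod f f ` adj A" using p ab by (auto simp: adj_def)
  qed
next
  show "map_prod f f ` adj A \<subseteq> adj (edge_image f A)"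
  proof
    fix p assume "p \<in> map_prod f f ` adj A"
    then obtain x y where "p = (f x, f y)" "{x,y} \<in> A" by (auto simp: adj_def)
    moreover then have "{f x, f y} = (\<lambda>e. f ` e) {x,y}" by simp
    ultimately show "p \<in> adj (edge_image f A)" unfolding adj_def edge_image_def by (metis (mono_tags) case_prod_conv image_eqI mem_Collect_eq)
  qed
qed

lemma rtrancl_map_inj:
  assumes "inj f" "(f x, w) \<in> (map_prod f f ` R)\<^sup>*"
  shows "\<exists>y. w = f y \<and> (x,y) \<in> R\<^sup>*"
  using assms(2)
proof (induction rule: rtrancl_induct)
  case base then show ?case by blast
next
  case (step b c)
  then obtain y where y: "b = f y" "(x,y) \<in> R\<^sup>*" by blast
  from step.hyps(2) obtain p q where pq: "(p,q) \<in> R" "b = f p" "c = f q" by auto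
  then have "p = y" using y assms(1) by (simp add: inj_eq)
  then have "(x,q) \<in> R\<^sup>*" using pq y by (meson rtrancl.rtrancl_into_rtrancl)
  then show ?case using pq by blast
qed

lemma rtrancl_map_mono:
  "(x,y) \<in> R\<^sup>* \<Longrightarrow> (f x, f y) \<in> (map_prod f f ` R)\<^sup>*"
proof (induction rule: rtrancl_induct)
  case base then show ?case by simp
next
  case (step b c)
  then have "(f b, f c) \<in> map_prod f f ` R" by force
  then show ?case using step.IH by (meson rtrancl.rtrancl_into_rtrancl)
qed

lemma conn_edge_image_range:
  assumes "inj f" "connected_in (edge_image f A) (f x) w"
  shows "\<exists>y. w = f y \<and> connected_in A x y"
  using rtrancl_map_inj[OF assms(1), of x w "adj A"] assms
  by (simp add: connected_in_def adj_edge_image)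

lemma conn_edge_image_iff:
  assumes "inj f" shows "connected_in (edge_image f A) (f x) (f y) \<longleftrightarrow> connected_in A x y"
proof
  assume "connected_in (edge_image f A) (f x) (f y)"
  then obtain z where "f y = f z" "connected_in A x z" using conn_edge_image_range[OF assms] by blast
  then show "connected_in A x y" using assms by (simp add: inj_eq)
next
  assume "connected_in A x y"
  then show "connected_in (edge_image f A) (f x) (f y)"
    using rtrancl_map_mono[of x y "adj A" f] by (simp add: connected_in_def adj_edge_image[OF assms])
qed

lemma component_edge_image:
  assumes "inj f" shows "component (edge_image f A) (f ` V) (f x) = f ` component A V x"
proof
  show "component (edge_image f A) (f ` V) (f x) \<subseteq> f ` component A V x"
    unfolding component_def using conn_edge_image_iff[OF assms] by auto
  show "f ` component A V x \<subseteq> component (edge_image f A) (f ` V) (f x)"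
    unfolding component_def using conn_edge_image_iff[OF assms] by auto
qed

lemma ncomp_edge_image:
  assumes "inj f" shows "ncomp (f ` V) (edge_image f A) = ncomp V A"
proof -
  have "component (edge_image f A) (f ` V) ` (f ` V) = (\<lambda>C. f ` C) ` (component A V ` V)"
    unfolding image_image by (simp add: component_edge_image[OF assms])
  moreover have "inj (\<lambda>C. f ` C)" using assms by (rule inj_image_fun)
  ultimately show ?thesis unfolding ncomp_components by (metis card_image inj_on_subset subset_UNIV)
qed

lemma card_edge_image: assumes "inj f" shows "card (edge_image f A) = card A"
  unfolding edge_image_def by (rule card_image, rule inj_on_subset[OF inj_image_fun[OF assms]], simp)

lemma nullity_edge_image: "inj f \<Longrightarrow> nullity (f ` V) (edge_image f A) = nullity V A"
proof -
  assume f: "inj f"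
  then have "card (f ` V) = card V" by (rule card_image[OF inj_on_subset]) simp
  then show ?thesis using f by (simp add: nullity_def ncomp_edge_image card_edge_image)
qed

text \<open>Disjoint union of copies B i of edge sets, copy i living on the words
  with first letter i; this is how Sigma_(n+1) contains three copies of Sigma_n.\<close>

definition copy_edges :: "'i set \<Rightarrow> ('i \<Rightarrow> 'i list set set) \<Rightarrow> 'i list set set" where
  "copy_edges I B = (\<Union>i\<in>I. edge_image (Cons i) (B i))"

definition copy_verts :: "'i set \<Rightarrow> 'i list set \<Rightarrow> 'i list set" where
  "copy_verts I V = (\<Union>i\<in>I. Cons i ` V)"

lemma adj_copy_edges: "adj (copy_edges I B) = (\<Union>i\<in>I. map_prod (Cons i) (Cons i) ` adj (B i))"
proof -
  have "adj (copy_edges I B) = (\<Union>i\<in>I. adj (edge_image (Cons i) (B i)))" by (auto simp: adj_def copy_edges_def)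
  then show ?thesis by (simp add: adj_edge_image)
qed

lemma conn_copy_edges_range:
  assumes "connected_in (copy_edges I B) (i # x) w"
  shows "\<exists>y. w = i # y \<and> connected_in (B i) x y"
proof -
  have "(i # x, w) \<in> (\<Union>i\<in>I. map_prod (Cons i) (Cons i) ` adj (B i))\<^sup>*"
    using assms by (simp add: connected_in_def adj_copy_edges)
  then show ?thesis
  proof (induction rule: rtrancl_induct)
    case base then show ?case by auto
  next
    case (step b c)
    then obtain y where y: "b = i # y" "connected_in (B i) x y" by blast
    from step.hyps(2) obtain j p q where "j \<in> I" "(p,q) \<in> adj (B j)" "b = j # p" "c = j # q" by auto
    then have "j = i" "p = y" "(y,q) \<in> adj (B i)" using y by auto
    then have "connected_in (B i) x q" using y(2) unfolding connected_in_def
      by (meson rtrancl.rtrancl_into_rtrancl)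
    then show ?case using \<open>c = j # q\<close> \<open>j = i\<close> by blast
  qed
qed

lemma conn_copy_edges_iff:
  assumes "i \<in> I"
  shows "connected_in (copy_edges I B) (i # x) (j # y) \<longleftrightarrow> i = j \<and> connected_in (B i) x y"
proof
  assume "connected_in (copy_edges I B) (i # x) (j # y)"
  then show "i = j \<and> connected_in (B i) x y" using conn_copy_edges_range by fastforce
next
  assume a: "i = j \<and> connected_in (B i) x y"
  have "edge_image (Cons i) (B i) \<subseteq> copy_edges I B" using assms by (auto simp: copy_edges_def)
  moreover have "connected_in (edge_image (Cons i) (B i)) (i # x) (i # y)"
  proof -
    have "connected_in (B i) x y" using a by blast
    then show ?thesis using conn_edge_image_iff[OF inj_Cons, of i "B i" x y] by simp
  qed
  ultimately have "connected_in (copy_edges I B) (i # x) (i # y)" by (rule conn_mono)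
  then show "connected_in (copy_edges I B) (i # x) (j # y)" using a by simp
qed

lemma component_copy_edges:
  assumes "i \<in> I" "x \<in> V"
  shows "component (copy_edges I B) (copy_verts I V) (i # x) = Cons i ` component (B i) V x"
proof
  show "component (copy_edges I B) (copy_verts I V) (i # x) \<subseteq> Cons i ` component (B i) V x"
  proof
    fix w assume "w \<in> component (copy_edges I B) (copy_verts I V) (i # x)"
    then have w: "w \<in> copy_verts I V" "connected_in (copy_edges I B) (i # x) w" by (auto simp: component_def)
    obtain y where y: "w = i # y" "connected_in (B i) x y" using conn_copy_edges_range[OF w(2)] by blast
    then have "y \<in> V" using w(1) by (auto simp: copy_verts_def)
    then show "w \<in> Cons i ` component (B i) V x" using y by (simp add: component_def)
  qed
next
  show "Cons i ` component (B i) V x \<subseteq> component (copy_edges I B) (copy_verts I V) (i # x)"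
  proof
    fix w assume "w \<in> Cons i ` component (B i) V x"
    then obtain y where y: "w = i # y" "y \<in> V" "connected_in (B i) x y" by (auto simp: component_def)
    then have "w \<in> copy_verts I V" using assms(1) by (auto simp: copy_verts_def)
    moreover have "connected_in (copy_edges I B) (i # x) w"
      using y conn_copy_edges_iff[OF assms(1)] by simp
    ultimately show "w \<in> component (copy_edges I B) (copy_verts I V) (i # x)"
      by (simp add: component_def)
  qed
qed

lemma ncomp_copy_edges:
  assumes "finite I" "finite V"
  shows "ncomp (copy_verts I V) (copy_edges I B) = (\<Sum>i\<in>I. ncomp V (B i))"
proof -
  have eq: "component (copy_edges I B) (copy_verts I V) ` copy_verts I V = (\<Union>i\<in>I. (\<lambda>C. Cons i ` C) ` (component (B i) V ` V))"
  proof -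
    have "component (copy_edges I B) (copy_verts I V) ` copy_verts I V = (\<Union>i\<in>I. component (copy_edges I B) (copy_verts I V) ` Cons i ` V)"
      by (auto simp: copy_verts_def)
    also have "\<dots> = (\<Union>i\<in>I. (\<lambda>C. Cons i ` C) ` (component (B i) V ` V))"
      using component_copy_edges[of _ I _ V B] by (intro SUP_cong refl) (auto simp: image_image)
    finally show ?thesis .
  qed
  have disj: "((\<lambda>C. Cons i ` C) ` (component (B i) V ` V)) \<inter> ((\<lambda>C. Cons j ` C) ` (component (B j) V ` V)) = {}"
    if "i \<noteq> j" for i j
  proof (rule ccontr)
    assume "((\<lambda>C. Cons i ` C) ` (component (B i) V ` V)) \<inter> ((\<lambda>C. Cons j ` C) ` (component (B j) V ` V)) \<noteq> {}"
    then obtain x y where x: "x\<in>V" "y\<in>V" "Cons i ` component (B i) V x = Cons j ` component (B j) V y" by blast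
    have "i # x \<in> Cons i ` component (B i) V x" using x(1) by (simp add: component_def)
    then have "i # x \<in> Cons j ` component (B j) V y" using x(3) by simp
    then show False using that by auto
  qed
  have card_i: "card ((\<lambda>C. Cons i ` C) ` (component (B i) V ` V)) = ncomp V (B i)" for i
    unfolding ncomp_components by (rule card_image, rule inj_on_subset[OF inj_image_fun[OF inj_Cons]], simp)
  have "card (\<Union>i\<in>I. (\<lambda>C. Cons i ` C) ` (component (B i) V ` V)) = (\<Sum>i\<in>I. card ((\<lambda>C. Cons i ` C) ` (component (B i) V ` V)))"
    by (intro card_UN_disjoint ballI impI) (simp_all add: assms disj)
  then show ?thesis unfolding ncomp_components eq by (simp add: card_i[unfolded ncomp_components])
qed

lemma card_copy_verts: "finite I \<Longrightarrow> finite V \<Longrightarrow> card (copy_verts I V) = card I * card V"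
proof -
  assume a: "finite I" "finite V"
  have "card (\<Union>i\<in>I. Cons i ` V) = (\<Sum>i\<in>I. card (Cons i ` V))"
    by (intro card_UN_disjoint ballI impI) (auto simp: a)
  also have "\<dots> = (\<Sum>i\<in>I. card V)" by (intro sum.cong refl card_image) (simp add: inj_on_def)
  finally show ?thesis by (simp add: copy_verts_def)
qed

lemma card_copy_edges:
  assumes "finite I" "\<And>i. i \<in> I \<Longrightarrow> finite (B i)" "\<And>i. i \<in> I \<Longrightarrow> {} \<notin> B i"
  shows "card (copy_edges I B) = (\<Sum>i\<in>I. card (B i))"
proof -
  have d: "edge_image (Cons i) (B i) \<inter> edge_image (Cons j) (B j) = {}" if ij: "i \<noteq> j" "i \<in> I" for i j
  proof (rule ccontr)
    assume "edge_image (Cons i) (B i) \<inter> edge_image (Cons j) (B j) \<noteq> {}"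
    then obtain e e' where e: "e \<in> B i" "e' \<in> B j" "Cons i ` e = Cons j ` e'" by (auto simp: edge_image_def)
    then obtain x where "x \<in> e" using assms(3)[OF ij(2)] e(1) by (metis all_not_in_conv)
    then have "i # x \<in> Cons j ` e'" using e(3) by blast
    then show False using ij by auto
  qed
  have "card (\<Union>i\<in>I. edge_image (Cons i) (B i)) = (\<Sum>i\<in>I. card (edge_image (Cons i) (B i)))"
    by (intro card_UN_disjoint ballI impI) (auto simp: assms d finite_edge_image)
  also have "\<dots> = (\<Sum>i\<in>I. card (B i))" by (intro sum.cong refl card_edge_image inj_Cons)
  finally show ?thesis by (simp add: copy_edges_def)
qed

lemma nullity_copy_edges:
  assumes "finite I" "finite V" "\<And>i. i \<in> I \<Longrightarrow> finite (B i)" "\<And>i. i \<in> I \<Longrightarrow> {} \<notin> B i"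
  shows "nullity (copy_verts I V) (copy_edges I B) = (\<Sum>i\<in>I. nullity V (B i))"
  using assms by (simp add: nullity_def ncomp_copy_edges card_copy_verts card_copy_edges sum.distrib sum_subtractf)

lemma finite_copy_edges: "finite I \<Longrightarrow> (\<And>i. i \<in> I \<Longrightarrow> finite (B i)) \<Longrightarrow> finite (copy_edges I B)"
  by (simp add: copy_edges_def finite_edge_image)

lemma proper_copy_edges:
  assumes "\<And>i. i \<in> I \<Longrightarrow> proper_edges V (B i)"
  shows "proper_edges (copy_verts I V) (copy_edges I B)"
  unfolding proper_edges_def
proof
  fix e assume "e \<in> copy_edges I B"
  then obtain i e0 where e: "i \<in> I" "e0 \<in> B i" "e = Cons i ` e0" by (auto simp: copy_edges_def edge_image_def)
  then obtain u v where uv: "e0 = {u,v}" "u \<noteq> v" "u \<in> V" "v \<in> V"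
    using assms unfolding proper_edges_def by blast
  then have "e = {i # u, i # v}" "i # u \<noteq> i # v" "i # u \<in> copy_verts I V" "i # v \<in> copy_verts I V"
    using e by (auto simp: copy_verts_def)
  then show "\<exists>u v. e = {u, v} \<and> u \<noteq> v \<and> u \<in> copy_verts I V \<and> v \<in> copy_verts I V"
    by blast
qed

section \<open>The recursive structure of Sigma_n\<close>

text \<open>The bridge of Sigma_(n+1) joining copy i to copy j: it links the outmost
  vertex i j^n of copy i with the outmost vertex j i^n of copy j.\<close>

definition bridge :: "nat \<Rightarrow> nat \<Rightarrow> nat \<Rightarrow> nat list set" where
  "bridge n i j = {i # replicate n j, j # replicate n i}"

lemma sverts_Suc: "sverts (Suc n) = copy_verts {0,1,2} (sverts n)"
  by (simp add: copy_verts_def)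

lemma sedges_Suc: "sedges (Suc n) = copy_edges {0,1,2} (\<lambda>_. sedges n) \<union> {bridge n 0 1, bridge n 0 2, bridge n 1 2}"
proof (cases n)
  case 0 then show ?thesis by (simp add: copy_edges_def bridge_def edge_image_def insert_commute)
next
  case (Suc m) then show ?thesis
    by (simp add: copy_edges_def bridge_def edge_image_def top_v_def left_v_def right_v_def)
qed

lemma finite_sverts: "finite (sverts n)"
  by (induction n) auto

lemma replicate_sverts: "p \<in> {0,1,2} \<Longrightarrow> replicate n p \<in> sverts n"
  by (induction n) auto

lemma finite_sedges: "finite (sedges n)"
proof (induction n)
  case 0 then show ?case by simp
next
  case (Suc n) then show ?case by (simp add: sedges_Suc finite_copy_edges)
qed

lemma proper_sedges: "proper_edges (sverts n) (sedges n)"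
proof (induction n)
  case 0 then show ?case by (simp add: proper_edges_def)
next
  case (Suc n)
  have r: "replicate n 0 \<in> sverts n" "replicate n 1 \<in> sverts n" "replicate n 2 \<in> sverts n"
    using replicate_sverts by auto
  have bi: "\<exists>u v. bridge n i j = {u,v} \<and> u \<noteq> v \<and> u \<in> sverts (Suc n) \<and> v \<in> sverts (Suc n)"
    if "i \<in> {0,1,2}" "j \<in> {0,1,2}" "i \<noteq> j" for i j
    by (rule exI[of _ "i # replicate n j"], rule exI[of _ "j # replicate n i"]) (use that r in \<open>auto simp: bridge_def\<close>)
  have "proper_edges (sverts (Suc n)) {bridge n 0 1, bridge n 0 2, bridge n 1 2}"
    unfolding proper_edges_def using bi[of 0 1] bi[of 0 2] bi[of 1 2] by auto
  moreover have "proper_edges (sverts (Suc n)) (copy_edges {0,1,2} (\<lambda>_. sedges n))"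
    unfolding sverts_Suc by (rule proper_copy_edges, rule Suc)
  ultimately show ?case unfolding sedges_Suc proper_edges_def by blast
qed

lemma finite_subset_sedges: "A \<subseteq> sedges n \<Longrightarrow> finite A"
  using finite_subset finite_sedges by blast

lemma proper_subset_sedges: "A \<subseteq> sedges n \<Longrightarrow> proper_edges (sverts n) A"
  using proper_edges_subset proper_sedges by blast

lemma sedges_nonempty: "e \<in> sedges n \<Longrightarrow> e \<noteq> {}"
  using proper_edges_nonempty[OF proper_sedges] by blast

lemma nullity_sedges_nonneg: "A \<subseteq> sedges n \<Longrightarrow> 0 \<le> nullity (sverts n) A"
  by (rule nullity_nonneg[OF finite_sverts finite_subset_sedges proper_subset_sedges])

lemma bridge_notin_copy_edges: "i \<noteq> j \<Longrightarrow> bridge n i j \<notin> copy_edges I B"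
proof
  assume "i \<noteq> j" "bridge n i j \<in> copy_edges I B"
  then obtain k e where "bridge n i j = Cons k ` e" by (auto simp: copy_edges_def edge_image_def)
  moreover have "i # replicate n j \<in> bridge n i j" "j # replicate n i \<in> bridge n i j" by (auto simp: bridge_def)
  ultimately show False using \<open>i \<noteq> j\<close> by auto
qed

lemma bridges_distinct: "bridge n 0 1 \<noteq> bridge n 0 2" "bridge n 1 2 \<noteq> bridge n 0 1" "bridge n 1 2 \<noteq> bridge n 0 2"
  unfolding bridge_def by (auto simp: doubleton_eq_iff)


section \<open>Port types and gluing three copies\<close>

type_synonym ptype = "bool \<times> bool \<times> bool"

definition ptype :: "nat \<Rightarrow> nat list set set \<Rightarrow> ptype" where
  "ptype n A = (connected_in A (replicate n 0) (replicate n 1), connected_in A (replicate n 0) (replicate n 2),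
              connected_in A (replicate n 1) (replicate n 2))"

text \<open>By transitivity only five of the eight triples occur.\<close>

definition ptypes :: "ptype set" where
  "ptypes = {(True,True,True),(False,False,True),(True,False,False),(False,True,False),(False,False,False)}"

lemma ptype_in_ptypes: "ptype n A \<in> ptypes"
proof -
  let ?r = "replicate n" and ?c = "connected_in A"
  have "?c (?r 0) (?r 1) \<Longrightarrow> ?c (?r 0) (?r 2) \<Longrightarrow> ?c (?r 1) (?r 2)"
    "?c (?r 0) (?r 1) \<Longrightarrow> ?c (?r 1) (?r 2) \<Longrightarrow> ?c (?r 0) (?r 2)"
    "?c (?r 0) (?r 2) \<Longrightarrow> ?c (?r 1) (?r 2) \<Longrightarrow> ?c (?r 0) (?r 1)"
    using conn_trans conn_sym by metis+
  then show ?thesis unfolding ptype_def ptypes_def by auto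
qed

definition prel :: "ptype \<Rightarrow> nat \<Rightarrow> nat \<Rightarrow> bool" where
  "prel t p q = (case t of (a,b,c) \<Rightarrow> p = q \<or> ((p = 0 \<and> q = 1 \<or> p = 1 \<and> q = 0) \<and> a)
      \<or> ((p = 0 \<and> q = 2 \<or> p = 2 \<and> q = 0) \<and> b) \<or> ((p = 1 \<and> q = 2 \<or> p = 2 \<and> q = 1) \<and> c))"

lemma conn_ptype:
  assumes "p \<in> {0,1,2}" "q \<in> {0,1,2}"
  shows "connected_in A (replicate n p) (replicate n q) = prel (ptype n A) p q"
  using assms by (auto simp: prel_def ptype_def intro: conn_sym)

text \<open>Ports of Sigma_(n+1): the vertex i p^n is the outmost vertex p of copy i.
  A relation R on ports "describes" an edge set X if it is exactly the
  connectivity of X restricted to the ports.\<close>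

definition port :: "nat \<Rightarrow> nat \<times> nat \<Rightarrow> nat list" where
  "port n x = fst x # replicate n (snd x)"

definition ports :: "(nat \<times> nat) set" where "ports = {0,1,2} \<times> {0,1,2}"

type_synonym port_rel = "nat \<times> nat \<Rightarrow> nat \<times> nat \<Rightarrow> bool"

definition describes :: "nat \<Rightarrow> nat list set set \<Rightarrow> port_rel \<Rightarrow> bool" where
  "describes n X R \<longleftrightarrow> (\<forall>x\<in>ports. \<forall>y\<in>ports. connected_in X (port n x) (port n y) = R x y)"

definition copies_rel :: "(nat \<Rightarrow> ptype) \<Rightarrow> port_rel" where
  "copies_rel T x y = (fst x = fst y \<and> prel (T (fst x)) (snd x) (snd y))"

definition join_rel :: "port_rel \<Rightarrow> nat \<times> nat \<Rightarrow> nat \<times> nat \<Rightarrow> port_rel" where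
  "join_rel R u v x y = (R x y \<or> (R x u \<and> R v y) \<or> (R x v \<and> R u y))"

definition join_rel_if :: "bool \<Rightarrow> nat \<times> nat \<Rightarrow> nat \<times> nat \<Rightarrow> port_rel \<Rightarrow> port_rel" where
  "join_rel_if s u v R = (if s then join_rel R u v else R)"

definition insert_if :: "bool \<Rightarrow> 'a \<Rightarrow> 'a set \<Rightarrow> 'a set" where
  "insert_if s e X = (if s then insert e X else X)"

lemma describes_copies:
  assumes "\<forall>i\<in>{0,1,2}. B i \<subseteq> sedges n"
  shows "describes n (copy_edges {0,1,2} B) (copies_rel (\<lambda>i. ptype n (B i)))"
  unfolding describes_def
proof (intro ballI)
  fix x y assume xy: "x \<in> ports" "y \<in> ports"
  then have "fst x \<in> {0,1,2}" "snd x \<in> {0,1,2}" "snd y \<in> {0,1,2}" by (auto simp: ports_def)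
  then show "connected_in (copy_edges {0,1,2} B) (port n x) (port n y) = copies_rel (\<lambda>i. ptype n (B i)) x y"
    unfolding port_def copies_rel_def using conn_copy_edges_iff[of "fst x" "{0,1,2}" B "replicate n (snd x)" "fst y" "replicate n (snd y)"]
      conn_ptype[of "snd x" "snd y"] by auto
qed

lemma describes_insert:
  assumes "describes n X R" "u \<in> ports" "v \<in> ports"
  shows "describes n (insert {port n u, port n v} X) (join_rel R u v)"
  using assms unfolding describes_def join_rel_def by (simp add: conn_insert)

lemma describes_insert_if:
  assumes "describes n X R" "u \<in> ports" "v \<in> ports"
  shows "describes n (insert_if s {port n u, port n v} X) (join_rel_if s u v R)"
  using describes_insert[OF assms] assms(1) by (simp add: insert_if_def join_rel_if_def)

lemma port_in_sverts: "x \<in> ports \<Longrightarrow> port n x \<in> sverts (Suc n)"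
  by (auto simp: ports_def port_def replicate_sverts)

lemma nullity_insert_if:
  assumes "describes n X R" "u \<in> ports" "v \<in> ports" "finite X" "{port n u, port n v} \<notin> X"
  shows "nullity (sverts (Suc n)) (insert_if s {port n u, port n v} X)
    = nullity (sverts (Suc n)) X + (if s \<and> R u v then 1 else 0)"
proof (cases s)
  case True
  have "connected_in X (port n u) (port n v) = R u v" using assms unfolding describes_def by blast
  then show ?thesis
    using True nullity_insert[OF finite_sverts assms(4) port_in_sverts[OF assms(2)] port_in_sverts[OF assms(3)] assms(5)]
    by (simp add: insert_if_def)
next
  case False then show ?thesis by (simp add: insert_if_def)
qed

lemma bridge_port: "bridge n i j = {port n (i,j), port n (j,i)}"
  by (simp add: bridge_def port_def)

text \<open>Its port relation after
  each bridge, the number of bridges closing a cycle, and its port type are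
  computed from the port types T i of the parts alone.\<close>

definition glue_rel1 where "glue_rel1 T s1 = join_rel_if s1 (0,1) (1,0) (copies_rel T)"
definition glue_rel2 where "glue_rel2 T s1 s2 = join_rel_if s2 (0,2) (2,0) (glue_rel1 T s1)"
definition glue_rel3 where "glue_rel3 T s1 s2 s3 = join_rel_if s3 (1,2) (2,1) (glue_rel2 T s1 s2)"
definition glue_cycles :: "(nat \<Rightarrow> ptype) \<Rightarrow> bool \<Rightarrow> bool \<Rightarrow> bool \<Rightarrow> int" where
  "glue_cycles T s1 s2 s3 = (if s1 \<and> copies_rel T (0,1) (1,0) then 1 else 0)
     + (if s2 \<and> glue_rel1 T s1 (0,2) (2,0) then 1 else 0)
     + (if s3 \<and> glue_rel2 T s1 s2 (1,2) (2,1) then 1 else 0)"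
definition glue_ptype :: "(nat \<Rightarrow> ptype) \<Rightarrow> bool \<Rightarrow> bool \<Rightarrow> bool \<Rightarrow> ptype" where
  "glue_ptype T s1 s2 s3 =
     (glue_rel3 T s1 s2 s3 (0,0) (1,1), glue_rel3 T s1 s2 s3 (0,0) (2,2), glue_rel3 T s1 s2 s3 (1,1) (2,2))"

definition glue :: "nat \<Rightarrow> (nat \<Rightarrow> nat list set set) \<Rightarrow> bool \<Rightarrow> bool \<Rightarrow> bool \<Rightarrow> nat list set set" where
  "glue n B s1 s2 s3 =
     insert_if s3 (bridge n 1 2) (insert_if s2 (bridge n 0 2) (insert_if s1 (bridge n 0 1) (copy_edges {0,1,2} B)))"

lemma glue_ports:
  "(0::nat,1::nat) \<in> ports" "(1::nat,0::nat) \<in> ports" "(0::nat,2::nat) \<in> ports" "(2::nat,0::nat) \<in> ports"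
  "(1::nat,2::nat) \<in> ports" "(2::nat,1::nat) \<in> ports" "(0::nat,0::nat) \<in> ports" "(1::nat,1::nat) \<in> ports"
  "(2::nat,2::nat) \<in> ports"
  by (auto simp: ports_def)

lemma glue_stages:
  fixes s1 s2 s3 :: bool
  assumes B: "\<forall>i\<in>{0,1,2}. B i \<subseteq> sedges n"
  defines "X0 \<equiv> copy_edges {0,1,2} B"
  defines "X1 \<equiv> insert_if s1 (bridge n 0 1) X0"
  defines "X2 \<equiv> insert_if s2 (bridge n 0 2) X1"
  defines "T \<equiv> \<lambda>i. ptype n (B i)"
  shows "describes n X0 (copies_rel T)" "describes n X1 (glue_rel1 T s1)"
    "describes n X2 (glue_rel2 T s1 s2)"
    "describes n (glue n B s1 s2 s3) (glue_rel3 T s1 s2 s3)"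
    "glue n B s1 s2 s3 = insert_if s3 (bridge n 1 2) X2"
proof -
  note P = glue_ports
  show I0: "describes n X0 (copies_rel T)"
    unfolding X0_def T_def by (rule describes_copies[OF B])
  show I1: "describes n X1 (glue_rel1 T s1)"
    unfolding X1_def glue_rel1_def bridge_port by (rule describes_insert_if[OF I0 P(1,2)])
  show I2: "describes n X2 (glue_rel2 T s1 s2)"
    unfolding X2_def glue_rel2_def bridge_port by (rule describes_insert_if[OF I1 P(3,4)])
  show X3: "glue n B s1 s2 s3 = insert_if s3 (bridge n 1 2) X2"
    unfolding glue_def X2_def X1_def X0_def ..
  show "describes n (glue n B s1 s2 s3) (glue_rel3 T s1 s2 s3)"
    unfolding X3 glue_rel3_def bridge_port by (rule describes_insert_if[OF I2 P(5,6)])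
qed

lemma ptype_glue:
  assumes "\<forall>i\<in>{0,1,2}. B i \<subseteq> sedges n"
  shows "ptype (Suc n) (glue n B s1 s2 s3) = glue_ptype (\<lambda>i. ptype n (B i)) s1 s2 s3"
proof -
  have diag: "replicate (Suc n) p = port n (p,p)" for p by (simp add: port_def)
  show ?thesis
    using glue_stages(4)[OF assms] glue_ports(7,8,9)
    unfolding describes_def ptype_def glue_ptype_def diag by simp
qed

lemma nullity_glue:
  assumes B: "\<forall>i\<in>{0,1,2}. B i \<subseteq> sedges n"
  shows "nullity (sverts (Suc n)) (glue n B s1 s2 s3)
    = (\<Sum>i\<in>{0,1,2}. nullity (sverts n) (B i)) + glue_cycles (\<lambda>i. ptype n (B i)) s1 s2 s3"
proof -
  let ?T = "\<lambda>i. ptype n (B i)" and ?V = "sverts (Suc n)"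
  let ?X0 = "copy_edges {0,1,2} B"
  let ?X1 = "insert_if s1 (bridge n 0 1) ?X0"
  let ?X2 = "insert_if s2 (bridge n 0 2) ?X1"
  note S = glue_stages[OF B]
  note P = glue_ports
  have finB: "finite (B i)" if "i \<in> {0,1,2}" for i using B that finite_subset_sedges by blast
  have f0: "finite ?X0" using finB by (intro finite_copy_edges) auto
  have f1: "finite ?X1" "finite ?X2" using f0 by (simp_all add: insert_if_def)
  have n0: "bridge n 0 1 \<notin> ?X0" by (rule bridge_notin_copy_edges) simp
  have n1: "bridge n 0 2 \<notin> ?X1" "bridge n 1 2 \<notin> ?X2"
    unfolding insert_if_def
    using bridge_notin_copy_edges[of 0 2] bridge_notin_copy_edges[of 1 2] bridges_distinct
      bridges_distinct[THEN not_sym] by auto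
  have "nullity ?V ?X0 = (\<Sum>i\<in>{0,1,2}. nullity (sverts n) (B i))"
    unfolding sverts_Suc
  proof (rule nullity_copy_edges)
    show "{} \<notin> B i" if "i \<in> {0,1,2}" for i
      using sedges_nonempty B that by blast
  qed (use finite_sverts finB in auto)
  moreover have "nullity ?V ?X1 = nullity ?V ?X0 + (if s1 \<and> copies_rel ?T (0,1) (1,0) then 1 else 0)"
    using nullity_insert_if[OF S(1) P(1,2) f0] n0 by (simp add: bridge_port)
  moreover have "nullity ?V ?X2 = nullity ?V ?X1 + (if s2 \<and> glue_rel1 ?T s1 (0,2) (2,0) then 1 else 0)"
    using nullity_insert_if[OF S(2) P(3,4) f1(1)] n1(1) by (simp add: bridge_port)
  moreover have "nullity ?V (glue n B s1 s2 s3) = nullity ?V ?X2 + (if s3 \<and> glue_rel2 ?T s1 s2 (1,2) (2,1) then 1 else 0)"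
    unfolding S(5) using nullity_insert_if[OF S(3) P(5,6) f1(2)] n1(2) by (simp add: bridge_port)
  ultimately show ?thesis unfolding glue_cycles_def by simp
qed

definition sel3 :: "'b \<Rightarrow> 'b \<Rightarrow> 'b \<Rightarrow> nat \<Rightarrow> 'b" where
  "sel3 x y z i = (if i = 0 then x else if i = 1 then y else z)"

lemma sel3_subset: "B0 \<subseteq> E \<Longrightarrow> B1 \<subseteq> E \<Longrightarrow> B2 \<subseteq> E \<Longrightarrow> \<forall>i\<in>{0,1,2}. sel3 B0 B1 B2 i \<subseteq> E"
  by (simp add: sel3_def)

lemma mem_glue:
  "x \<in> glue n B s1 s2 s3 \<longleftrightarrow> x \<in> copy_edges {0,1,2} B
     \<or> (x = bridge n 0 1 \<and> s1) \<or> (x = bridge n 0 2 \<and> s2) \<or> (x = bridge n 1 2 \<and> s3)"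
  by (auto simp: glue_def insert_if_def)

lemma Cons_image_in_copy_edges:
  assumes "e \<noteq> {}" "i \<in> I"
  shows "Cons i ` e \<in> copy_edges I B \<longleftrightarrow> e \<in> B i"
proof
  assume "Cons i ` e \<in> copy_edges I B"
  then obtain j e' where j: "j \<in> I" "e' \<in> B j" "Cons i ` e = Cons j ` e'"
    by (auto simp: copy_edges_def edge_image_def)
  obtain x where "x \<in> e" using assms(1) by blast
  then have "i # x \<in> Cons j ` e'" using j(3) by blast
  then have "j = i" by auto
  then have "e = e'" using j(3) inj_image_eq_iff[OF inj_Cons] by metis
  then show "e \<in> B i" using j \<open>j = i\<close> by simp
next
  assume "e \<in> B i"
  then show "Cons i ` e \<in> copy_edges I B" using assms by (auto simp: copy_edges_def edge_image_def)
qed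

lemma Cons_image_not_bridge:
  assumes "e \<noteq> {}" "a \<noteq> b"
  shows "Cons i ` e \<noteq> bridge n a b"
proof
  assume h: "Cons i ` e = bridge n a b"
  have "a # replicate n b \<in> Cons i ` e" "b # replicate n a \<in> Cons i ` e" using h by (auto simp: bridge_def)
  then show False using assms(2) by auto
qed

type_synonym glue_param = "nat list set set \<times> nat list set set \<times> nat list set set \<times> bool \<times> bool \<times> bool"

definition glue_params :: "nat \<Rightarrow> glue_param set" where
  "glue_params n = Pow (sedges n) \<times> Pow (sedges n) \<times> Pow (sedges n) \<times> UNIV \<times> UNIV \<times> UNIV"

definition glue_map :: "nat \<Rightarrow> glue_param \<Rightarrow> nat list set set" where
  "glue_map n = (\<lambda>(B0,B1,B2,s1,s2,s3). glue n (sel3 B0 B1 B2) s1 s2 s3)"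

lemma glue_map_simp: "glue_map n (B0,B1,B2,s1,s2,s3) = glue n (sel3 B0 B1 B2) s1 s2 s3"
  by (simp add: glue_map_def)

definition restrict_copy :: "nat \<Rightarrow> nat \<Rightarrow> nat list set set \<Rightarrow> nat list set set" where
  "restrict_copy n i A = {e \<in> sedges n. Cons i ` e \<in> A}"

definition unglue :: "nat \<Rightarrow> nat list set set \<Rightarrow> glue_param" where
  "unglue n A = (restrict_copy n 0 A, restrict_copy n 1 A, restrict_copy n 2 A,
     bridge n 0 1 \<in> A, bridge n 0 2 \<in> A, bridge n 1 2 \<in> A)"

lemma unglue_glue:
  assumes "B0 \<subseteq> sedges n" "B1 \<subseteq> sedges n" "B2 \<subseteq> sedges n"
  shows "unglue n (glue n (sel3 B0 B1 B2) s1 s2 s3) = (B0,B1,B2,s1,s2,s3)"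
proof -
  let ?B = "sel3 B0 B1 B2"
  have parts: "restrict_copy n i (glue n ?B s1 s2 s3) = ?B i" if "i \<in> {0,1,2}" for i
  proof -
    have "e \<in> restrict_copy n i (glue n ?B s1 s2 s3) \<longleftrightarrow> e \<in> ?B i" for e
    proof (cases "e \<in> sedges n")
      case True
      then have ne: "e \<noteq> {}" by (rule sedges_nonempty)
      show ?thesis unfolding restrict_copy_def mem_glue
        using True Cons_image_in_copy_edges[OF ne that] Cons_image_not_bridge[OF ne] by auto
    next
      case False then show ?thesis using assms that by (auto simp: restrict_copy_def sel3_def)
    qed
    then show ?thesis by blast
  qed
  have bridges: "bridge n 0 1 \<in> glue n ?B s1 s2 s3 \<longleftrightarrow> s1" "bridge n 0 2 \<in> glue n ?B s1 s2 s3 \<longleftrightarrow> s2"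
    "bridge n 1 2 \<in> glue n ?B s1 s2 s3 \<longleftrightarrow> s3"
    unfolding mem_glue
    using bridge_notin_copy_edges[of 0 1] bridge_notin_copy_edges[of 0 2] bridge_notin_copy_edges[of 1 2]
      bridges_distinct bridges_distinct[THEN not_sym]
    by auto
  show ?thesis using parts[of 0] parts[of 1] parts[of 2] bridges by (simp add: unglue_def sel3_def)
qed

lemma glue_unglue:
  assumes A: "A \<subseteq> sedges (Suc n)"
  shows "glue_map n (unglue n A) = A"
proof -
  let ?B = "sel3 (restrict_copy n 0 A) (restrict_copy n 1 A) (restrict_copy n 2 A)"
  have "x \<in> glue n ?B (bridge n 0 1 \<in> A) (bridge n 0 2 \<in> A) (bridge n 1 2 \<in> A) \<longleftrightarrow> x \<in> A" for x
  proof
    assume "x \<in> glue n ?B (bridge n 0 1 \<in> A) (bridge n 0 2 \<in> A) (bridge n 1 2 \<in> A)"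
    then show "x \<in> A" unfolding mem_glue by (auto simp: copy_edges_def edge_image_def restrict_copy_def sel3_def)
  next
    assume x: "x \<in> A"
    then have "x \<in> sedges (Suc n)" using A by auto
    then consider "x \<in> copy_edges {0,1,2} (\<lambda>_. sedges n)" | "x = bridge n 0 1" | "x = bridge n 0 2" | "x = bridge n 1 2"
      unfolding sedges_Suc by blast
    then show "x \<in> glue n ?B (bridge n 0 1 \<in> A) (bridge n 0 2 \<in> A) (bridge n 1 2 \<in> A)"
    proof cases
      case 1
      then obtain i e where "i \<in> {0,1,2}" "e \<in> sedges n" "x = Cons i ` e" by (auto simp: copy_edges_def edge_image_def)
      then show ?thesis using x unfolding mem_glue by (auto simp: copy_edges_def edge_image_def restrict_copy_def sel3_def)
    qed (use x in \<open>auto simp: mem_glue\<close>)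
  qed
  then show ?thesis by (auto simp: glue_map_def unglue_def)
qed

lemma glue_subset_sedges:
  assumes "B0 \<subseteq> sedges n" "B1 \<subseteq> sedges n" "B2 \<subseteq> sedges n"
  shows "glue n (sel3 B0 B1 B2) s1 s2 s3 \<subseteq> sedges (Suc n)"
proof -
  have "copy_edges {0,1,2} (sel3 B0 B1 B2) \<subseteq> copy_edges {0,1,2} (\<lambda>_. sedges n)"
    using sel3_subset[OF assms] unfolding copy_edges_def edge_image_def by blast
  then show ?thesis unfolding sedges_Suc by (auto simp: mem_glue)
qed

lemma bij_glue_map: "bij_betw (glue_map n) (glue_params n) (Pow (sedges (Suc n)))"
proof (rule bij_betw_byWitness[where f' = "unglue n"])
  show "\<forall>d\<in>glue_params n. unglue n (glue_map n d) = d"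
  proof
    fix d assume "d \<in> glue_params n"
    then obtain B0 B1 B2 s1 s2 s3 where "d = (B0,B1,B2,s1,s2,s3)"
      "B0 \<subseteq> sedges n" "B1 \<subseteq> sedges n" "B2 \<subseteq> sedges n"
      by (auto simp: glue_params_def)
    then show "unglue n (glue_map n d) = d" by (simp add: glue_map_simp unglue_glue)
  qed
  show "\<forall>A\<in>Pow (sedges (Suc n)). glue_map n (unglue n A) = A"
    by (simp add: glue_unglue)
  show "glue_map n ` glue_params n \<subseteq> Pow (sedges (Suc n))"
  proof
    fix A assume "A \<in> glue_map n ` glue_params n"
    then obtain B0 B1 B2 s1 s2 s3 where "A = glue n (sel3 B0 B1 B2) s1 s2 s3"
      "B0 \<subseteq> sedges n" "B1 \<subseteq> sedges n" "B2 \<subseteq> sedges n"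
      by (auto simp: glue_params_def glue_map_def)
    then show "A \<in> Pow (sedges (Suc n))" using glue_subset_sedges by blast
  qed
  show "unglue n ` Pow (sedges (Suc n)) \<subseteq> glue_params n"
    by (auto simp: unglue_def glue_params_def restrict_copy_def)
qed

section \<open>Counting forests by port type\<close>

definition forest_ind :: "nat \<Rightarrow> nat list set set \<Rightarrow> real" where
  "forest_ind n A = (if nullity (sverts n) A = 0 then 1 else 0)"

definition fcount :: "nat \<Rightarrow> ptype \<Rightarrow> real" where
  "fcount n t = (\<Sum>A\<in>Pow (sedges n). if ptype n A = t then forest_ind n A else 0)"

lemma sum_by_ptype:
  "(\<Sum>A\<in>Pow (sedges n). forest_ind n A * F (ptype n A)) = (\<Sum>t\<in>ptypes. F t * fcount n t)"
proof -
  have fin: "finite ptypes" by (simp add: ptypes_def)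
  have "(\<Sum>A\<in>Pow (sedges n). forest_ind n A * F (ptype n A))
      = (\<Sum>A\<in>Pow (sedges n). \<Sum>t\<in>ptypes. if ptype n A = t then forest_ind n A * F t else 0)"
    using ptype_in_ptypes fin by (intro sum.cong refl) (simp add: sum.delta)
  also have "\<dots> = (\<Sum>t\<in>ptypes. \<Sum>A\<in>Pow (sedges n). if ptype n A = t then forest_ind n A * F t else 0)"
    by (rule sum.swap)
  also have "\<dots> = (\<Sum>t\<in>ptypes. F t * fcount n t)"
    unfolding fcount_def sum_distrib_left by (intro sum.cong refl) (simp add: mult.commute)
  finally show ?thesis .
qed

definition bool3 :: "(bool \<times> bool \<times> bool) list" where
  "bool3 = [(s1, s2, s3). s1 \<leftarrow> [False, True], s2 \<leftarrow> [False, True], s3 \<leftarrow> [False, True]]"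

definition glue_coeff :: "ptype \<Rightarrow> ptype \<Rightarrow> ptype \<Rightarrow> ptype \<Rightarrow> nat" where
  "glue_coeff t0 t1 t2 t = length (filter (\<lambda>(s1, s2, s3).
     glue_cycles (sel3 t0 t1 t2) s1 s2 s3 = 0 \<and> glue_ptype (sel3 t0 t1 t2) s1 s2 s3 = t) bool3)"

lemma glue_coeff_sum:
  "real (glue_coeff t0 t1 t2 t) = (\<Sum>s1\<in>UNIV. \<Sum>s2\<in>UNIV. \<Sum>s3\<in>UNIV.
     if glue_cycles (sel3 t0 t1 t2) s1 s2 s3 = 0 \<and> glue_ptype (sel3 t0 t1 t2) s1 s2 s3 = t then 1 else 0)"
  by (simp add: glue_coeff_def bool3_def UNIV_bool)

lemma forest_ind_glue:
  assumes "B0 \<subseteq> sedges n" "B1 \<subseteq> sedges n" "B2 \<subseteq> sedges n"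
  defines "T \<equiv> sel3 (ptype n B0) (ptype n B1) (ptype n B2)"
  shows "(if ptype (Suc n) (glue n (sel3 B0 B1 B2) s1 s2 s3) = t
          then forest_ind (Suc n) (glue n (sel3 B0 B1 B2) s1 s2 s3) else 0)
    = forest_ind n B0 * (forest_ind n B1 * (forest_ind n B2 *
        (if glue_cycles T s1 s2 s3 = 0 \<and> glue_ptype T s1 s2 s3 = t then 1 else 0)))"
proof -
  have B: "\<forall>i\<in>{0,1,2}. sel3 B0 B1 B2 i \<subseteq> sedges n" by (rule sel3_subset[OF assms(1-3)])
  have T: "(\<lambda>i. ptype n (sel3 B0 B1 B2 i)) = T" unfolding T_def by (rule ext) (simp add: sel3_def)
  have parts: "(\<Sum>i\<in>{0,1,2}. nullity (sverts n) (sel3 B0 B1 B2 i))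
      = nullity (sverts n) B0 + nullity (sverts n) B1 + nullity (sverts n) B2"
    by (simp add: sel3_def)
  have "0 \<le> nullity (sverts n) B0" "0 \<le> nullity (sverts n) B1" "0 \<le> nullity (sverts n) B2"
    using assms(1-3) by (simp_all add: nullity_sedges_nonneg)
  moreover have "0 \<le> glue_cycles T s1 s2 s3" by (simp add: glue_cycles_def)
  ultimately show ?thesis
    unfolding forest_ind_def ptype_glue[OF B] nullity_glue[OF B] T parts by auto
qed

lemma sum_glue_params:
  "(\<Sum>d\<in>glue_params n. g d) = (\<Sum>B0\<in>Pow (sedges n). \<Sum>B1\<in>Pow (sedges n). \<Sum>B2\<in>Pow (sedges n).
       \<Sum>s1\<in>UNIV. \<Sum>s2\<in>UNIV. \<Sum>s3\<in>UNIV. g (B0,B1,B2,s1,s2,s3))"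
  by (simp add: glue_params_def sum.cartesian_product)

lemma fcount_Suc:
  "fcount (Suc n) t = (\<Sum>t0\<in>ptypes. (\<Sum>t1\<in>ptypes. (\<Sum>t2\<in>ptypes.
     real (glue_coeff t0 t1 t2 t) * fcount n t2) * fcount n t1) * fcount n t0)"
proof -
  let ?P = "Pow (sedges n)" and ?w = "forest_ind n"
  let ?f = "\<lambda>A. if ptype (Suc n) A = t then forest_ind (Suc n) A else 0"
  let ?G = "\<lambda>t0 t1 t2. real (glue_coeff t0 t1 t2 t)"
  have "fcount (Suc n) t = (\<Sum>d\<in>glue_params n. ?f (glue_map n d))"
    unfolding fcount_def by (rule sum.reindex_bij_betw[OF bij_glue_map, symmetric])
  also have "\<dots> = (\<Sum>B0\<in>?P. \<Sum>B1\<in>?P. \<Sum>B2\<in>?P. \<Sum>s1\<in>UNIV. \<Sum>s2\<in>UNIV. \<Sum>s3\<in>UNIV.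
       ?f (glue n (sel3 B0 B1 B2) s1 s2 s3))"
    unfolding sum_glue_params glue_map_simp ..
  also have "\<dots> = (\<Sum>B0\<in>?P. \<Sum>B1\<in>?P. \<Sum>B2\<in>?P.
       ?w B0 * (?w B1 * (?w B2 * ?G (ptype n B0) (ptype n B1) (ptype n B2))))"
    by (intro sum.cong refl) (simp add: forest_ind_glue glue_coeff_sum sum_distrib_left)
  also have "\<dots> = (\<Sum>B0\<in>?P. \<Sum>B1\<in>?P. ?w B0 * (?w B1 *
       (\<Sum>t2\<in>ptypes. ?G (ptype n B0) (ptype n B1) t2 * fcount n t2)))"
  proof (intro sum.cong refl)
    fix B0 B1
    show "(\<Sum>B2\<in>?P. ?w B0 * (?w B1 * (?w B2 * ?G (ptype n B0) (ptype n B1) (ptype n B2))))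
      = ?w B0 * (?w B1 * (\<Sum>t2\<in>ptypes. ?G (ptype n B0) (ptype n B1) t2 * fcount n t2))"
      using sum_by_ptype[of n "?G (ptype n B0) (ptype n B1)"] by (simp add: sum_distrib_left[symmetric])
  qed
  also have "\<dots> = (\<Sum>B0\<in>?P. ?w B0 *
       (\<Sum>t1\<in>ptypes. (\<Sum>t2\<in>ptypes. ?G (ptype n B0) t1 t2 * fcount n t2) * fcount n t1))"
  proof (intro sum.cong refl)
    fix B0
    show "(\<Sum>B1\<in>?P. ?w B0 * (?w B1 * (\<Sum>t2\<in>ptypes. ?G (ptype n B0) (ptype n B1) t2 * fcount n t2)))
      = ?w B0 * (\<Sum>t1\<in>ptypes. (\<Sum>t2\<in>ptypes. ?G (ptype n B0) t1 t2 * fcount n t2) * fcount n t1)"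
      using sum_by_ptype[of n "\<lambda>t1. \<Sum>t2\<in>ptypes. ?G (ptype n B0) t1 t2 * fcount n t2"]
      by (simp add: sum_distrib_left[symmetric])
  qed
  also have "\<dots> = (\<Sum>t0\<in>ptypes. (\<Sum>t1\<in>ptypes. (\<Sum>t2\<in>ptypes. ?G t0 t1 t2 * fcount n t2) * fcount n t1) * fcount n t0)"
    by (rule sum_by_ptype)
  finally show ?thesis .
qed

definition ptype_list :: "ptype list" where
  "ptype_list = [(True,True,True), (False,False,True), (True,False,False), (False,True,False),
     (False,False,False)]"

definition ptype_triples :: "(ptype \<times> ptype \<times> ptype) list" where
  "ptype_triples = [(t0, t1, t2). t0 \<leftarrow> ptype_list, t1 \<leftarrow> ptype_list, t2 \<leftarrow> ptype_list]"

lemma sum_ptypes: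
  "(\<Sum>t\<in>ptypes. f t) = f (True,True,True) + f (False,False,True) + f (True,False,False)
     + f (False,True,False) + f (False,False,False)"
  by (simp add: ptypes_def add.assoc)

text \<open>The gluing coefficients for the three target types that matter, computed
  by evaluation (one row per type of the first copy).\<close>

lemma glue_coeff_TTT_table:
  "map (\<lambda>(t0, t1, t2). glue_coeff t0 t1 t2 (True,True,True)) ptype_triples =
    [3, 2, 0, 2, 0, 2, 0, 0, 0, 0, 2, 0, 0, 2, 0, 0, 0, 0, 0, 0, 0, 0, 0, 0, 0,
     0, 0, 0, 0, 0, 0, 0, 0, 0, 0, 0, 0, 0, 0, 0, 0, 0, 0, 0, 0, 0, 0, 0, 0, 0,
     2, 2, 0, 0, 0, 0, 0, 0, 0, 0, 0, 0, 0, 0, 0, 0, 0, 0, 0, 0, 0, 0, 0, 0, 0,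
     2, 0, 0, 0, 0, 2, 0, 0, 0, 0, 0, 0, 0, 0, 0, 0, 0, 0, 0, 0, 0, 0, 0, 0, 0,
     0, 0, 0, 0, 0, 0, 0, 0, 0, 0, 0, 0, 0, 0, 0, 0, 0, 0, 0, 0, 0, 0, 0, 0, 0]"
  by code_simp

lemma glue_coeff_FFT_table:
  "map (\<lambda>(t0, t1, t2). glue_coeff t0 t1 t2 (False,False,True)) ptype_triples =
    [1, 2, 0, 0, 0, 2, 4, 0, 0, 0, 0, 0, 0, 0, 0, 0, 0, 0, 0, 0, 0, 0, 0, 0, 0,
     4, 4, 0, 2, 0, 4, 4, 0, 0, 0, 2, 0, 0, 2, 0, 0, 0, 0, 0, 0, 0, 0, 0, 0, 0,
     2, 2, 0, 0, 0, 4, 4, 0, 0, 0, 0, 0, 0, 0, 0, 0, 0, 0, 0, 0, 0, 0, 0, 0, 0,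
     2, 4, 0, 0, 0, 2, 4, 0, 0, 0, 0, 0, 0, 0, 0, 0, 0, 0, 0, 0, 0, 0, 0, 0, 0,
     4, 4, 0, 0, 0, 4, 4, 0, 0, 0, 0, 0, 0, 0, 0, 0, 0, 0, 0, 0, 0, 0, 0, 0, 0]"
  by code_simp

lemma glue_coeff_FFF_table:
  "map (\<lambda>(t0, t1, t2). glue_coeff t0 t1 t2 (False,False,False)) ptype_triples =
    [1, 2, 3, 2, 4, 2, 4, 6, 4, 8, 2, 4, 4, 2, 4, 3, 6, 7, 4, 8, 4, 8, 8, 4, 8,
     3, 4, 7, 6, 8, 4, 4, 8, 8, 8, 6, 8, 8, 6, 8, 7, 8, 7, 8, 8, 8, 8, 8, 8, 8,
     2, 2, 4, 4, 4, 4, 4, 8, 8, 8, 4, 4, 4, 4, 4, 6, 6, 8, 8, 8, 8, 8, 8, 8, 8,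
     2, 4, 6, 4, 8, 2, 4, 6, 4, 8, 4, 8, 8, 4, 8, 4, 8, 8, 4, 8, 4, 8, 8, 4, 8,
     4, 4, 8, 8, 8, 4, 4, 8, 8, 8, 8, 8, 8, 8, 8, 8, 8, 8, 8, 8, 8, 8, 8, 8, 8]"
  by code_simp

lemmas glue_coeff_tables =
  glue_coeff_TTT_table[unfolded ptype_triples_def ptype_list_def, simplified]
  glue_coeff_FFT_table[unfolded ptype_triples_def ptype_list_def, simplified]
  glue_coeff_FFF_table[unfolded ptype_triples_def ptype_list_def, simplified]

lemma fcount_recursion:
  assumes "fcount n (True,True,True) = h" "fcount n (False,False,True) = a"
    "fcount n (True,False,False) = a" "fcount n (False,True,False) = a" "fcount n (False,False,False) = m"
  shows "fcount (Suc n) (True,True,True) = 3*h^3 + 12*h^2*a + 6*h*a^2"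
    and "fcount (Suc n) (False,False,True)
      = h^3 + 12*h^2*a + 4*h^2*m + 28*h*a^2 + 8*h*a*m + 14*a^3 + 4*a^2*m"
    and "fcount (Suc n) (False,False,False) = h^3 + 21*h^2*a + 12*h^2*m + 123*h*a^2 + 120*h*a*m
      + 24*h*m^2 + 173*a^3 + 204*a^2*m + 72*a*m^2 + 8*m^3"
  unfolding fcount_Suc sum_ptypes assms
  by (simp_all only: glue_coeff_tables)
    (simp_all add: algebra_simps power2_eq_square power3_eq_cube)

section \<open>Symmetry\<close>

text \<open>A permutation s of the letters 0, 1, 2 that maps the set of bridges onto
  itself induces an automorphism of every Sigma_n (apply s to every letter of a
  word); it preserves forests and permutes the outmost vertices.  Two
  transpositions show that the three "one pair connected" counts agree.\<close>

lemma map_Cons_img: "map s ` Cons i ` X = Cons (s i) ` map s ` X"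
  by (auto simp: image_image)

lemma sverts_perm:
  assumes "s ` {0,1,2} = {0,1,2}"
  shows "map s ` sverts n = sverts n"
proof (induction n)
  case 0 then show ?case by simp
next
  case (Suc n)
  have "map s ` sverts (Suc n) = (\<Union>i\<in>{0,1,2}. Cons (s i) ` sverts n)"
    by (simp add: image_Un map_Cons_img Suc)
  also have "\<dots> = (\<Union>j\<in>s ` {0,1,2}. Cons j ` sverts n)" by (simp add: SUP_image comp_def)
  also have "\<dots> = sverts (Suc n)" unfolding assms by simp
  finally show ?case .
qed

lemma edge_image_copy_edges:
  assumes "\<forall>i\<in>I. B i = E"
  shows "edge_image (map s) (copy_edges I B) = copy_edges (s ` I) (\<lambda>_. edge_image (map s) E)"
proof -
  have "edge_image (map s) (edge_image (Cons i) E) = edge_image (Cons (s i)) (edge_image (map s) E)" for i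
    unfolding edge_image_def by (simp add: image_image)
  note h = this
  have "edge_image (map s) (copy_edges I B) = (\<Union>i\<in>I. edge_image (map s) (edge_image (Cons i) (B i)))"
    unfolding copy_edges_def edge_image_def by (rule image_UN)
  also have "\<dots> = (\<Union>i\<in>I. edge_image (Cons (s i)) (edge_image (map s) E))"
    using assms h by (intro SUP_cong refl) simp
  also have "\<dots> = copy_edges (s ` I) (\<lambda>_. edge_image (map s) E)"
    unfolding copy_edges_def by (simp add: SUP_image comp_def)
  finally show ?thesis .
qed

lemma bridge_map: "map s ` bridge n i j = bridge n (s i) (s j)"
  by (simp add: bridge_def)

lemma bridge_sym: "bridge n i j = bridge n j i"
  by (simp add: bridge_def insert_commute)

lemma sedges_perm:
  assumes "s ` {0,1,2} = {0,1,2}"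
    and "\<And>n. {bridge n (s 0) (s 1), bridge n (s 0) (s 2), bridge n (s 1) (s 2)} = {bridge n 0 1, bridge n 0 2, bridge n 1 2}"
  shows "edge_image (map s) (sedges n) = sedges n"
proof (induction n)
  case 0 then show ?case by (simp add: edge_image_def)
next
  case (Suc n)
  have "edge_image (map s) (sedges (Suc n)) = edge_image (map s) (copy_edges {0,1,2} (\<lambda>_. sedges n))
      \<union> edge_image (map s) {bridge n 0 1, bridge n 0 2, bridge n 1 2}"
    unfolding sedges_Suc edge_image_def by (rule image_Un)
  also have "edge_image (map s) (copy_edges {0,1,2} (\<lambda>_. sedges n)) = copy_edges {0,1,2} (\<lambda>_. sedges n)"
    using edge_image_copy_edges[of "{0,1,2}" "\<lambda>_. sedges n" "sedges n" s] Suc assms(1) by simp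
  also have "edge_image (map s) {bridge n 0 1, bridge n 0 2, bridge n 1 2} = {bridge n 0 1, bridge n 0 2, bridge n 1 2}"
    using assms(2)[of n] by (simp add: edge_image_def bridge_map)
  finally show ?case by (simp add: sedges_Suc)
qed

lemma fcount_perm:
  assumes inv: "\<And>k. s (s k) = k" and s3: "s ` {0,1,2} = {0,1,2}"
    and bbs: "\<And>n. {bridge n (s 0) (s 1), bridge n (s 0) (s 2), bridge n (s 1) (s 2)} = {bridge n 0 1, bridge n 0 2, bridge n 1 2}"
  shows "fcount n t = (\<Sum>A\<in>Pow (sedges n). if ptype n (edge_image (map s) A) = t then forest_ind n A else 0)"
proof -
  let ?f = "edge_image (map s)"
  have injs: "inj s" using inv by (metis injI)
  then have injm: "inj (map s)" by simp
  have injf: "inj_on ?f (Pow (sedges n))"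
    unfolding edge_image_def by (rule inj_on_subset[OF inj_image_fun[OF inj_image_fun[OF injm]]]) simp
  have img: "?f ` Pow (sedges n) = Pow (sedges n)"
    unfolding edge_image_def by (rule image_Pow_surj) (use sedges_perm[OF s3 bbs] in \<open>simp add: edge_image_def\<close>)
  have wtf: "forest_ind n (?f A) = forest_ind n A" for A
  proof -
    have "nullity (sverts n) (?f A) = nullity (map s ` sverts n) (?f A)" by (simp add: sverts_perm[OF s3])
    also have "\<dots> = nullity (sverts n) A" by (rule nullity_edge_image[OF injm])
    finally show ?thesis by (simp add: forest_ind_def)
  qed
  have "fcount n t = (\<Sum>A\<in>?f ` Pow (sedges n). if ptype n A = t then forest_ind n A else 0)"
    unfolding fcount_def img ..
  also have "\<dots> = (\<Sum>A\<in>Pow (sedges n). if ptype n (?f A) = t then forest_ind n (?f A) else 0)"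
    using sum.reindex[OF injf, of "\<lambda>A. if ptype n A = t then forest_ind n A else 0"] by (simp add: comp_def)
  finally show ?thesis unfolding wtf .
qed

lemma ptype_perm:
  assumes inv: "\<And>k. s (s k) = k"
  shows "ptype n (edge_image (map s) A) = (connected_in A (replicate n (s 0)) (replicate n (s 1)),
     connected_in A (replicate n (s 0)) (replicate n (s 2)), connected_in A (replicate n (s 1)) (replicate n (s 2)))"
proof -
  have injm: "inj (map s)" using inv by (metis injI inj_map)
  have r: "replicate n p = map s (replicate n (s p))" for p by (simp add: inv)
  show ?thesis unfolding ptype_def
    by (subst (1 2 3 4 5 6) r) (simp only: conn_edge_image_iff[OF injm])
qed

definition swap_letters :: "nat \<Rightarrow> nat \<Rightarrow> nat \<Rightarrow> nat" where
  "swap_letters a b k = (if k = a then b else if k = b then a else k)"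

lemma swap01: "\<And>k. swap_letters 0 1 (swap_letters 0 1 k) = k" "swap_letters 0 1 ` {0,1,2} = {0,1,2}"
  "\<And>n. {bridge n (swap_letters 0 1 0) (swap_letters 0 1 1), bridge n (swap_letters 0 1 0) (swap_letters 0 1 2),
          bridge n (swap_letters 0 1 1) (swap_letters 0 1 2)} = {bridge n 0 1, bridge n 0 2, bridge n 1 2}"
  by (auto simp: swap_letters_def bridge_sym)

lemma swap12: "\<And>k. swap_letters 1 2 (swap_letters 1 2 k) = k" "swap_letters 1 2 ` {0,1,2} = {0,1,2}"
  "\<And>n. {bridge n (swap_letters 1 2 0) (swap_letters 1 2 1), bridge n (swap_letters 1 2 0) (swap_letters 1 2 2),
          bridge n (swap_letters 1 2 1) (swap_letters 1 2 2)} = {bridge n 0 1, bridge n 0 2, bridge n 1 2}"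
proof -
  show "\<And>k. swap_letters 1 2 (swap_letters 1 2 k) = k" by (simp add: swap_letters_def)
  show "swap_letters 1 2 ` {0,1,2} = {0,1,2}" by (auto simp: swap_letters_def)
  fix n
  have b: "bridge n 2 1 = bridge n 1 2" by (rule bridge_sym)
  have sv: "swap_letters 1 2 0 = 0" "swap_letters 1 2 1 = 2" "swap_letters 1 2 2 = 1" by (simp_all add: swap_letters_def)
  show "{bridge n (swap_letters 1 2 0) (swap_letters 1 2 1), bridge n (swap_letters 1 2 0) (swap_letters 1 2 2),
      bridge n (swap_letters 1 2 1) (swap_letters 1 2 2)} = {bridge n 0 1, bridge n 0 2, bridge n 1 2}"
    unfolding sv b by (rule insert_commute)
qed

lemma fcount_sym01: "fcount n (False,False,True) = fcount n (False,True,False)"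
proof -
  have tp: "ptype n (edge_image (map (swap_letters 0 1)) A) = (connected_in A (replicate n 1) (replicate n 0),
      connected_in A (replicate n 1) (replicate n 2), connected_in A (replicate n 0) (replicate n 2))" for A
  proof -
    have sv: "swap_letters 0 1 0 = 1" "swap_letters 0 1 1 = 0" "swap_letters 0 1 2 = 2" by (simp_all add: swap_letters_def)
    show ?thesis using ptype_perm[OF swap01(1), of n A] unfolding sv .
  qed
  have e: "ptype n (edge_image (map (swap_letters 0 1)) A) = (False,False,True) \<longleftrightarrow> ptype n A = (False,True,False)" for A
    unfolding tp unfolding ptype_def using conn_sym_iff[of A "replicate n 1" "replicate n 0"] by auto
  have "fcount n (False,False,True) = (\<Sum>A\<in>Pow (sedges n).
      if ptype n (edge_image (map (swap_letters 0 1)) A) = (False,False,True) then forest_ind n A else 0)"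
    by (rule fcount_perm[OF swap01])
  also have "\<dots> = fcount n (False,True,False)"
    unfolding fcount_def e ..
  finally show ?thesis .
qed

lemma fcount_sym12: "fcount n (False,True,False) = fcount n (True,False,False)"
proof -
  have tp: "ptype n (edge_image (map (swap_letters 1 2)) A) = (connected_in A (replicate n 0) (replicate n 2),
      connected_in A (replicate n 0) (replicate n 1), connected_in A (replicate n 2) (replicate n 1))" for A
  proof -
    have sv: "swap_letters 1 2 0 = 0" "swap_letters 1 2 1 = 2" "swap_letters 1 2 2 = 1" by (simp_all add: swap_letters_def)
    show ?thesis using ptype_perm[OF swap12(1), of n A] unfolding sv .
  qed
  have e: "ptype n (edge_image (map (swap_letters 1 2)) A) = (False,True,False) \<longleftrightarrow> ptype n A = (True,False,False)" for A
    unfolding tp unfolding ptype_def using conn_sym_iff[of A "replicate n 2" "replicate n 1"] by auto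
  have "fcount n (False,True,False) = (\<Sum>A\<in>Pow (sedges n).
      if ptype n (edge_image (map (swap_letters 1 2)) A) = (False,True,False) then forest_ind n A else 0)"
    by (rule fcount_perm[OF swap12])
  also have "\<dots> = fcount n (True,False,False)"
    unfolding fcount_def e ..
  finally show ?thesis .
qed

section \<open>The Tutte evaluations and the main theorem\<close>

lemma tweight_forest_ind: "A \<subseteq> sedges n \<Longrightarrow> tweight (sverts n) (sedges n) A 2 1 = forest_ind n A"
  unfolding forest_ind_def
  by (rule tweight_2_1[OF finite_sverts finite_subset_sedges proper_subset_sedges])

lemma sum_filter_Pow:
  "finite E \<Longrightarrow> (\<Sum>A | A \<subseteq> E \<and> P A. f A) = (\<Sum>A\<in>Pow E. if P A then f A else 0)"
proof -
  assume "finite E"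
  have "{A. A \<subseteq> E \<and> P A} = {A \<in> Pow E. P A}" by auto
  then show ?thesis using sum.inter_filter[of "Pow E" f P] \<open>finite E\<close> by simp
qed

lemma ptype_TTT: "ptype n A = (True,True,True) \<longleftrightarrow> connected_in A (top_v n) (left_v n) \<and> connected_in A (top_v n) (right_v n)"
  unfolding ptype_def top_v_def left_v_def right_v_def
  using conn_trans[OF conn_sym[of A "replicate n 0" "replicate n 1"], of "replicate n 2"] by auto

lemma ptype_FFT: "ptype n A = (False,False,True) \<longleftrightarrow> connected_in A (left_v n) (right_v n) \<and> \<not> connected_in A (top_v n) (left_v n)"
  unfolding ptype_def top_v_def left_v_def right_v_def
  using conn_trans[of A "replicate n 0" "replicate n 2" "replicate n 1"] conn_sym[of A "replicate n 1" "replicate n 2"] by auto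

lemma ptype_FFF: "ptype n A = (False,False,False) \<longleftrightarrow> \<not> connected_in A (top_v n) (left_v n) \<and> \<not> connected_in A (top_v n) (right_v n)
   \<and> \<not> connected_in A (left_v n) (right_v n)"
  unfolding ptype_def top_v_def left_v_def right_v_def by auto

lemma H2_fcount: "H2 n 2 1 = fcount n (True,True,True)"
  unfolding H2_def sum_filter_Pow[OF finite_sedges] fcount_def
  by (intro sum.cong refl) (simp add: tweight_forest_ind ptype_TTT)

lemma N_fcount: "N n 2 1 = fcount n (False,False,True)"
  unfolding N_def H1_def sum_filter_Pow[OF finite_sedges] fcount_def
  by (simp, intro sum.cong refl) (simp add: tweight_forest_ind ptype_FFT)

lemma M_fcount: "M n 2 1 = fcount n (False,False,False)"
  unfolding M_def H0_def sum_filter_Pow[OF finite_sedges] fcount_def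
  by (simp, intro sum.cong refl) (simp add: tweight_forest_ind ptype_FFF)

lemma H_forest_ind: "H n 2 1 = (\<Sum>A\<in>Pow (sedges n). forest_ind n A)"
  unfolding H_def tutte_def by (intro sum.cong refl) (simp add: tweight_forest_ind)

lemma H_fcount: "H n 2 1 = fcount n (True,True,True) + fcount n (False,False,True) + fcount n (True,False,False)
   + fcount n (False,True,False) + fcount n (False,False,False)"
  using sum_by_ptype[of n "\<lambda>_. 1"] unfolding H_forest_ind sum_ptypes by simp

lemma card_forests: "real (card (spanning_forests (sedges n))) = H n 2 1"
proof -
  have "\<not> has_cycle A \<longleftrightarrow> nullity (sverts n) A = 0" if "A \<subseteq> sedges n" for A
    using has_cycle_nullity[OF finite_sverts finite_subset_sedges[OF that] proper_subset_sedges[OF that]]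
      nullity_sedges_nonneg[OF that] by auto
  then have "spanning_forests (sedges n) = {A \<in> Pow (sedges n). nullity (sverts n) A = 0}"
    unfolding spanning_forests_def by auto
  then have "card (spanning_forests (sedges n)) = (\<Sum>A\<in>Pow (sedges n). if nullity (sverts n) A = 0 then 1 else 0)"
    using sum.inter_filter[of "Pow (sedges n)" "\<lambda>_. 1::nat" "\<lambda>A. nullity (sverts n) A = 0"] finite_sedges by simp
  then show ?thesis unfolding H_forest_ind forest_ind_def by (simp add: of_nat_sum) (rule sum.cong, simp_all)
qed

text \<open>Sigma_0 is a single vertex, so its only edge set is the empty forest of
  type "all connected".\<close>

lemma fcount_0: "fcount 0 t = (if t = (True,True,True) then 1 else 0)"
proof -
  have "ptype 0 {} = (True,True,True)" by (simp add: ptype_def)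
  moreover have "forest_ind 0 {} = 1" by (simp add: forest_ind_def nullity_empty)
  ultimately show ?thesis by (simp add: fcount_def)
qed

lemma fcount_one_pair:
  "fcount n (True,False,False) = N n 2 1" "fcount n (False,True,False) = N n 2 1"
  using fcount_sym01[of n] fcount_sym12[of n] by (simp_all add: N_fcount)

text \<open>The recursion in terms of H2, N, M, valid for every n (including n = 0).\<close>

lemma H2_N_M_Suc:
  fixes n :: nat
  defines "h \<equiv> H2 n 2 1" and "a \<equiv> N n 2 1" and "m \<equiv> M n 2 1"
  shows "H2 (Suc n) 2 1 = 3*h^3 + 12*h^2*a + 6*h*a^2"
    and "N (Suc n) 2 1 = h^3 + 12*h^2*a + 4*h^2*m + 28*h*a^2 + 8*h*a*m + 14*a^3 + 4*a^2*m"
    and "M (Suc n) 2 1 = h^3 + 21*h^2*a + 12*h^2*m + 123*h*a^2 + 120*h*a*m + 24*h*m^2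
                          + 173*a^3 + 204*a^2*m + 72*a*m^2 + 8*m^3"
proof -
  have c: "fcount n (True,True,True) = h" "fcount n (False,False,True) = a"
    "fcount n (True,False,False) = a" "fcount n (False,True,False) = a" "fcount n (False,False,False) = m"
    unfolding h_def a_def m_def by (simp_all add: H2_fcount N_fcount M_fcount fcount_one_pair)
  show "H2 (Suc n) 2 1 = 3*h^3 + 12*h^2*a + 6*h*a^2"
    using fcount_recursion(1)[OF c] by (simp add: H2_fcount)
  show "N (Suc n) 2 1 = h^3 + 12*h^2*a + 4*h^2*m + 28*h*a^2 + 8*h*a*m + 14*a^3 + 4*a^2*m"
    using fcount_recursion(2)[OF c] by (simp add: N_fcount)
  show "M (Suc n) 2 1 = h^3 + 21*h^2*a + 12*h^2*m + 123*h*a^2 + 120*h*a*m + 24*h*m^2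
                          + 173*a^3 + 204*a^2*m + 72*a*m^2 + 8*m^3"
    using fcount_recursion(3)[OF c] by (simp add: M_fcount)
qed

theorem proposition4p9:
  shows "(\<forall>n\<ge>1. real (card (spanning_forests (sedges n))) = H n 2 1
            \<and> H n 2 1 = H2 n 2 1 + 3 * N n 2 1 + M n 2 1)
    \<and> (\<forall>n\<ge>1. let h = H2 n 2 1; a = N n 2 1; m = M n 2 1 in
          H2 (Suc n) 2 1 = 3*h^3 + 12*h^2*a + 6*h*a^2
        \<and> N (Suc n) 2 1 = h^3 + 12*h^2*a + 4*h^2*m + 28*h*a^2 + 8*h*a*m + 14*a^3 + 4*a^2*m
        \<and> M (Suc n) 2 1 = h^3 + 21*h^2*a + 12*h^2*m + 123*h*a^2 + 120*h*a*m + 24*h*m^2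
                          + 173*a^3 + 204*a^2*m + 72*a*m^2 + 8*m^3)
    \<and> H2 1 2 1 = 3 \<and> N 1 2 1 = 1 \<and> M 1 2 1 = 1"
proof -
  have split: "H n 2 1 = H2 n 2 1 + 3 * N n 2 1 + M n 2 1" for n
    by (simp add: H_fcount H2_fcount N_fcount M_fcount fcount_one_pair)
  have base: "H2 0 2 1 = 1" "N 0 2 1 = 0" "M 0 2 1 = 0"
    by (simp_all add: H2_fcount N_fcount M_fcount fcount_0)
  show ?thesis
    using card_forests split H2_N_M_Suc H2_N_M_Suc[of 0, unfolded base] by (simp add: Let_def)
qed

end
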